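(* Let $(\mathfrak H_{-,+},\mathfrak H,\Gamma_0,\Gamma_1)$ be an m-boundary tuple for $M^*$, let $V$ be a fixed linear homeomorphism from $\mathfrak H$ onto $\mathfrak H_{-,+}$, and let $V^\#:\mathfrak H_{+,-}\to\mathfrak H$ be its $\mathfrak H$-pairing-adjoint. (i) An extension $\widehat M$ of $M$ is an m-dissipative operator in $\mathfrak X^{2,S}$ if and only if it is the restriction of $M^*$ to the set of $\psi\in\mathrm{dom}M^*$ satisfying $$(K+I_{\mathfrak H})V^{-1}\Gamma_0\psi+\mathrm i(K-I_{\mathfrak H})V^\#\Gamma_1\psi=0$$ for some contraction $K$ on $\mathfrak H$. (ii) This establishes a one-to-one correspondence between contractions $K$ on $\mathfrak H$ and m-dissipative extensions $\widehat M$ of $M$; moreover $\widehat M$ is selfadjoint if and only if $K$ is unitary.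
   Context: $A$ is a closed densely defined symmetric operator in a Hilbert space $\mathfrak X$; $S$ is a bounded uniformly positive selfadjoint operator in $\mathfrak X^2=\mathfrak X\oplus\mathfrak X$; $\mathfrak X^{2,S}$ is $\mathfrak X^2$ with inner product $(S\cdot|\cdot)_{\mathfrak X^2}$. $M\{\psi_1,\psi_2\}=S^{-1}\{\mathrm iA\psi_2,-\mathrm iA\psi_1\}$ on $(\mathrm{dom}A)^2$; it is closed symmetric in $\mathfrak X^{2,S}$ with adjoint $M^*\{\psi_1,\psi_2\}=S^{-1}\{\mathrm iA^*\psi_2,-\mathrm iA^*\psi_1\}$ on $(\mathrm{dom}A^* )^2$. Mixed-order duality: given a Hilbert space $\mathfrak H$, a Hilbert space $\mathfrak H_{-,+}$ is an m-order space associated with $\mathfrak H$ if $\widetilde{\mathfrak H}_{-,+}:=\mathfrak H\cap\mathfrak H_{-,+}$ is dense in both and the quadratic form $\|h\|^2_{\mathfrak H_{-,+}}$, $h\in\widetilde{\mathfrak H}_{-,+}$, is closed in $\mathfrak H$. Two m-order spaces $\mathfrak H_{-,+},\mathfrak H_{+,-}$ are dual to each other w.r.t. $\mathfrak H$ if $\|h\|_{\mathfrak H_{\pm,\mp}}=\sup_{0\ne g\in\widetilde{\mathfrak H}_{\mp,\pm}}|(g|h)_{\mathfrak H}|/\|g\|_{\mathfrak H_{\mp,\pm}}$ for $h\in\widetilde{\mathfrak H}_{\pm,\mp}$. Then $(\cdot|\cdot)_{\mathfrak H}$ on $\widetilde{\mathfrak H}_{-,+}\times\widetilde{\mathfrak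 H}_{+,-}$ extends uniquely to a bounded sesquilinear form $\langle\cdot|\cdot\rangle_{\mathfrak H}$ on $\mathfrak H_{-,+}\times\mathfrak H_{+,-}$ (the $\mathfrak H$-pairing), and $\langle h_{+,-}|h_{-,+}\rangle_{\mathfrak H}:=\overline{\langle h_{-,+}|h_{+,-}\rangle_{\mathfrak H}}$; on $\mathfrak H\times\mathfrak H$ it denotes $(\cdot|\cdot)_{\mathfrak H}$. An m-boundary tuple for $M^*$ is $(\mathfrak H_{-,+},\mathfrak H,\Gamma_0,\Gamma_1)$ with $\mathfrak H_{\mp,\pm}$ dual m-order spaces w.r.t. $\mathfrak H$ and linear maps $\Gamma_0:\mathrm{dom}M^*\to\mathfrak H_{-,+}$, $\Gamma_1:\mathrm{dom}M^*\to\mathfrak H_{+,-}$ such that (M1) $f\mapsto\{\Gamma_0f,\Gamma_1f\}$ maps $\mathrm{dom}M^*$ onto $\mathfrak H_{-,+}\oplus\mathfrak H_{+,-}$, and (M2) $(M^*f|g)-(f|M^*g)=\langle\Gamma_1f|\Gamma_0g\rangle_{\mathfrak H}-\langle\Gamma_0f|\Gamma_1g\rangle_{\mathfrak H}$ for all $f,g\in\mathrm{dom}M^*$ (inner products in $\mathfrak X^{2,S}$). The $\mathfrak H$-pairing-adjoint of $V$ is the operator $V^\#:\mathfrak H_{+,-}\to\mathfrak H$ with $\langle Vf|g\rangle_{\mathfrak H}=(f|V^\#g)_{\mathfrak H}$ for all $f\in\mathfrak H$, $g\in\mathfrak H_{+,-}$. m-dissipative: upper half-plane in resolvent set, $\|(T-\lambda)^{-1}\|\le(\mathrm{Im}\lambda)^{-1}$;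 a contraction on $\mathfrak H$ is an everywhere defined operator of norm $\le1$. *)

theory Defs
  imports "HOL-Analysis.Analysis"
begin

class cvec = ab_group_add +
  fixes scaleC :: "complex \<Rightarrow> 'a \<Rightarrow> 'a" (infixr \<open>*\<^sub>C\<close> 75)
  assumes scaleC_add_right: "a *\<^sub>C (x + y) = a *\<^sub>C x + a *\<^sub>C y"
    and scaleC_add_left: "(a + b) *\<^sub>C x = a *\<^sub>C x + b *\<^sub>C x"
    and scaleC_scaleC: "a *\<^sub>C (b *\<^sub>C x) = (a * b) *\<^sub>C x"
    and scaleC_one: "1 *\<^sub>C x = x"

instantiation prod :: (cvec, cvec) cvec
begin
definition scaleC_prod_def: "c *\<^sub>C p = (c *\<^sub>C fst p, c *\<^sub>C snd p)"
instance
  by standard (auto simp: scaleC_prod_def scaleC_add_right scaleC_add_left scaleC_scaleC scaleC_one)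
end

definition subspaceC :: "'a::cvec set \<Rightarrow> bool" where
  "subspaceC D \<longleftrightarrow> 0 \<in> D \<and> (\<forall>x\<in>D. \<forall>y\<in>D. x + y \<in> D) \<and> (\<forall>c. \<forall>x\<in>D. c *\<^sub>C x \<in> D)"

text \<open>Linear map defined on a subspace \<open>D\<close> (values outside \<open>D\<close> are irrelevant).\<close>
definition linear_on :: "'a::cvec set \<Rightarrow> ('a \<Rightarrow> 'b::cvec) \<Rightarrow> bool" where
  "linear_on D f \<longleftrightarrow> subspaceC D \<and>
     (\<forall>x\<in>D. \<forall>y\<in>D. f (x + y) = f x + f y) \<and> (\<forall>c. \<forall>x\<in>D. f (c *\<^sub>C x) = c *\<^sub>C f x)"

text \<open>Inner products are linear in the first and conjugate linear in the second argument.\<close>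
definition inner_product_on :: "'a::cvec set \<Rightarrow> ('a \<Rightarrow> 'a \<Rightarrow> complex) \<Rightarrow> bool" where
  "inner_product_on H ip \<longleftrightarrow> subspaceC H \<and>
     (\<forall>x\<in>H. \<forall>y\<in>H. \<forall>z\<in>H. ip (x + y) z = ip x z + ip y z) \<and>
     (\<forall>c. \<forall>x\<in>H. \<forall>y\<in>H. ip (c *\<^sub>C x) y = c * ip x y) \<and>
     (\<forall>x\<in>H. \<forall>y\<in>H. ip y x = cnj (ip x y)) \<and>
     (\<forall>x\<in>H. Re (ip x x) \<ge> 0 \<and> Im (ip x x) = 0) \<and>
     (\<forall>x\<in>H. ip x x = 0 \<longrightarrow> x = 0)"

definition nrm :: "('a \<Rightarrow> 'a \<Rightarrow> complex) \<Rightarrow> 'a \<Rightarrow> real" where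
  "nrm ip x = sqrt (Re (ip x x))"

definition conv :: "('a::cvec \<Rightarrow> 'a \<Rightarrow> complex) \<Rightarrow> (nat \<Rightarrow> 'a) \<Rightarrow> 'a \<Rightarrow> bool" where
  "conv ip xs x \<longleftrightarrow> (\<lambda>n. nrm ip (xs n - x)) \<longlonglongrightarrow> 0"

definition cauchy :: "('a::cvec \<Rightarrow> 'a \<Rightarrow> complex) \<Rightarrow> (nat \<Rightarrow> 'a) \<Rightarrow> bool" where
  "cauchy ip xs \<longleftrightarrow> (\<forall>e>0. \<exists>N. \<forall>m\<ge>N. \<forall>n\<ge>N. nrm ip (xs m - xs n) < e)"

definition hilbert_on :: "'a::cvec set \<Rightarrow> ('a \<Rightarrow> 'a \<Rightarrow> complex) \<Rightarrow> bool" where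
  "hilbert_on H ip \<longleftrightarrow> inner_product_on H ip \<and>
     (\<forall>xs. (\<forall>n. xs n \<in> H) \<and> cauchy ip xs \<longrightarrow> (\<exists>x\<in>H. conv ip xs x))"

definition dense_in :: "('a::cvec \<Rightarrow> 'a \<Rightarrow> complex) \<Rightarrow> 'a set \<Rightarrow> 'a set \<Rightarrow> bool" where
  "dense_in ip D H \<longleftrightarrow> D \<subseteq> H \<and> (\<forall>x\<in>H. \<forall>e>0. \<exists>d\<in>D. nrm ip (x - d) < e)"

definition bounded_on :: "('a::cvec \<Rightarrow> 'a \<Rightarrow> complex) \<Rightarrow> ('b::cvec \<Rightarrow> 'b \<Rightarrow> complex) \<Rightarrow> 'a set \<Rightarrow> ('a \<Rightarrow> 'b) \<Rightarrow> bool" where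
  "bounded_on ip1 ip2 H f \<longleftrightarrow> (\<exists>C. \<forall>x\<in>H. nrm ip2 (f x) \<le> C * nrm ip1 x)"

section \<open>Unbounded operators in a Hilbert space \<open>(UNIV, ip)\<close>\<close>

text \<open>An operator is a pair (domain \<open>D\<close>, action \<open>T\<close> on \<open>D\<close>).\<close>

definition operator :: "'a::cvec set \<Rightarrow> ('a \<Rightarrow> 'a) \<Rightarrow> bool" where
  "operator D T \<longleftrightarrow> linear_on D T"

definition closed_op :: "('a::cvec \<Rightarrow> 'a \<Rightarrow> complex) \<Rightarrow> 'a set \<Rightarrow> ('a \<Rightarrow> 'a) \<Rightarrow> bool" where
  "closed_op ip D T \<longleftrightarrow> (\<forall>xs x y. (\<forall>n. xs n \<in> D) \<and> conv ip xs x \<and> conv ip (\<lambda>n. T (xs n)) y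
       \<longrightarrow> x \<in> D \<and> T x = y)"

definition symmetric_op :: "('a::cvec \<Rightarrow> 'a \<Rightarrow> complex) \<Rightarrow> 'a set \<Rightarrow> ('a \<Rightarrow> 'a) \<Rightarrow> bool" where
  "symmetric_op ip D T \<longleftrightarrow> dense_in ip D UNIV \<and> (\<forall>f\<in>D. \<forall>g\<in>D. ip (T f) g = ip f (T g))"

definition adj_dom :: "('a::cvec \<Rightarrow> 'a \<Rightarrow> complex) \<Rightarrow> 'a set \<Rightarrow> ('a \<Rightarrow> 'a) \<Rightarrow> 'a set" where
  "adj_dom ip D T = {g. \<exists>h. \<forall>f\<in>D. ip (T f) g = ip f h}"

definition adj :: "('a::cvec \<Rightarrow> 'a \<Rightarrow> complex) \<Rightarrow> 'a set \<Rightarrow> ('a \<Rightarrow> 'a) \<Rightarrow> 'a \<Rightarrow> 'a" where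
  "adj ip D T g = (SOME h. \<forall>f\<in>D. ip (T f) g = ip f h)"

text \<open>Selfadjoint: densely defined, \<open>T \<subseteq> T*\<close> and \<open>dom T* = dom T\<close>.\<close>
definition selfadjoint_op :: "('a::cvec \<Rightarrow> 'a \<Rightarrow> complex) \<Rightarrow> 'a set \<Rightarrow> ('a \<Rightarrow> 'a) \<Rightarrow> bool" where
  "selfadjoint_op ip D T \<longleftrightarrow> symmetric_op ip D T \<and> adj_dom ip D T = D"

definition in_resolvent :: "('a::cvec \<Rightarrow> 'a \<Rightarrow> complex) \<Rightarrow> 'a set \<Rightarrow> ('a \<Rightarrow> 'a) \<Rightarrow> complex \<Rightarrow> bool" where
  "in_resolvent ip D T l \<longleftrightarrow> bij_betw (\<lambda>x. T x - l *\<^sub>C x) D UNIV \<and>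
     (\<exists>C. \<forall>x\<in>D. nrm ip x \<le> C * nrm ip (T x - l *\<^sub>C x))"

definition m_dissipative :: "('a::cvec \<Rightarrow> 'a \<Rightarrow> complex) \<Rightarrow> 'a set \<Rightarrow> ('a \<Rightarrow> 'a) \<Rightarrow> bool" where
  "m_dissipative ip D T \<longleftrightarrow> operator D T \<and>
     (\<forall>l. Im l > 0 \<longrightarrow> in_resolvent ip D T l \<and>
        (\<forall>x\<in>D. nrm ip x \<le> nrm ip (T x - l *\<^sub>C x) / Im l))"

definition extends_op :: "'a set \<Rightarrow> ('a \<Rightarrow> 'a) \<Rightarrow> 'a set \<Rightarrow> ('a::cvec \<Rightarrow> 'a) \<Rightarrow> bool" where
  "extends_op D0 T0 D T \<longleftrightarrow> operator D T \<and> D0 \<subseteq> D \<and> (\<forall>x\<in>D0. T x = T0 x)"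

section \<open>The operators \<open>M\<close>, \<open>M*\<close> in \<open>\<XX>\<^sup>2\<close>\<close>

definition ip2 :: "('x::cvec \<Rightarrow> 'x \<Rightarrow> complex) \<Rightarrow> 'x \<times> 'x \<Rightarrow> 'x \<times> 'x \<Rightarrow> complex" where
  "ip2 ip f g = ip (fst f) (fst g) + ip (snd f) (snd g)"

definition ipS :: "('x::cvec \<Rightarrow> 'x \<Rightarrow> complex) \<Rightarrow> ('x \<times> 'x \<Rightarrow> 'x \<times> 'x) \<Rightarrow> 'x \<times> 'x \<Rightarrow> 'x \<times> 'x \<Rightarrow> complex" where
  "ipS ip S f g = ip2 ip (S f) g"

definition bounded_unif_pos_sa :: "('x::cvec \<Rightarrow> 'x \<Rightarrow> complex) \<Rightarrow> ('x \<times> 'x \<Rightarrow> 'x \<times> 'x) \<Rightarrow> bool" where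
  "bounded_unif_pos_sa ip S \<longleftrightarrow> linear_on UNIV S \<and> bounded_on (ip2 ip) (ip2 ip) UNIV S \<and>
     (\<forall>f g. ip2 ip (S f) g = ip2 ip f (S g)) \<and>
     (\<exists>c>0. \<forall>f. Re (ip2 ip (S f) f) \<ge> c * (nrm (ip2 ip) f)\<^sup>2)"

definition M_dom :: "'x set \<Rightarrow> ('x \<times> 'x) set" where
  "M_dom DA = DA \<times> DA"

definition M_op :: "('x \<times> 'x \<Rightarrow> 'x \<times> 'x) \<Rightarrow> ('x::cvec \<Rightarrow> 'x) \<Rightarrow> 'x \<times> 'x \<Rightarrow> 'x \<times> 'x" where
  "M_op S A p = inv S (\<i> *\<^sub>C A (snd p), - (\<i> *\<^sub>C A (fst p)))"

definition Mstar_dom :: "('x::cvec \<Rightarrow> 'x \<Rightarrow> complex) \<Rightarrow> 'x set \<Rightarrow> ('x \<Rightarrow> 'x) \<Rightarrow> ('x \<times> 'x) set" where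
  "Mstar_dom ip DA A = adj_dom ip DA A \<times> adj_dom ip DA A"

definition Mstar_op :: "('x::cvec \<Rightarrow> 'x \<Rightarrow> complex) \<Rightarrow> ('x \<times> 'x \<Rightarrow> 'x \<times> 'x) \<Rightarrow> 'x set \<Rightarrow> ('x \<Rightarrow> 'x) \<Rightarrow> 'x \<times> 'x \<Rightarrow> 'x \<times> 'x" where
  "Mstar_op ip S DA A p = M_op S (adj ip DA A) p"

section \<open>Mixed-order spaces and m-boundary tuples\<close>

text \<open>All spaces \<open>\<HH>\<close>, \<open>\<HH>\<^sub>-\<^sub>,\<^sub>+\<close>, \<open>\<HH>\<^sub>+\<^sub>,\<^sub>-\<close> are subspaces of one ambient complex vector
  space \<open>'h\<close>, each with its own Hilbert inner product, so that intersections make sense.\<close>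

definition m_order_space :: "'h::cvec set \<Rightarrow> ('h \<Rightarrow> 'h \<Rightarrow> complex) \<Rightarrow> 'h set \<Rightarrow> ('h \<Rightarrow> 'h \<Rightarrow> complex) \<Rightarrow> bool" where
  "m_order_space H ipH Hm ipm \<longleftrightarrow> hilbert_on H ipH \<and> hilbert_on Hm ipm \<and>
     dense_in ipH (H \<inter> Hm) H \<and> dense_in ipm (H \<inter> Hm) Hm \<and>
     \<comment> \<open>the form \<open>h \<mapsto> \<parallel>h\<parallel>\<^sup>2\<close> on \<open>H \<inter> Hm\<close> is closed in \<open>H\<close>\<close>
     (\<forall>hs h. (\<forall>n. hs n \<in> H \<inter> Hm) \<and> h \<in> H \<and> conv ipH hs h \<and> cauchy ipm hs
        \<longrightarrow> h \<in> H \<inter> Hm \<and> conv ipm hs h)"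

text \<open>\<open>\<parallel>h\<parallel>\<^sub>2 = sup {|(g|h)| / \<parallel>g\<parallel>\<^sub>1 : 0 \<noteq> g \<in> H \<inter> H\<^sub>1}\<close>, written as least upper bound.\<close>
definition dual_norm_formula :: "'h::cvec set \<Rightarrow> ('h \<Rightarrow> 'h \<Rightarrow> complex) \<Rightarrow> 'h set \<Rightarrow> ('h \<Rightarrow> 'h \<Rightarrow> complex) \<Rightarrow> 'h set \<Rightarrow> ('h \<Rightarrow> 'h \<Rightarrow> complex) \<Rightarrow> bool" where
  "dual_norm_formula H ipH H1 ip1 H2 ip2' \<longleftrightarrow>
     (\<forall>h\<in>H \<inter> H2. (\<forall>g\<in>H \<inter> H1. cmod (ipH g h) \<le> nrm ip2' h * nrm ip1 g) \<and>
        (\<forall>c\<ge>0. (\<forall>g\<in>H \<inter> H1. cmod (ipH g h) \<le> c * nrm ip1 g) \<longrightarrow> nrm ip2' h \<le> c))"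

definition dual_m_order :: "'h::cvec set \<Rightarrow> ('h \<Rightarrow> 'h \<Rightarrow> complex) \<Rightarrow> 'h set \<Rightarrow> ('h \<Rightarrow> 'h \<Rightarrow> complex) \<Rightarrow> 'h set \<Rightarrow> ('h \<Rightarrow> 'h \<Rightarrow> complex) \<Rightarrow> bool" where
  "dual_m_order H ipH Hm ipm Hp ipp \<longleftrightarrow> m_order_space H ipH Hm ipm \<and> m_order_space H ipH Hp ipp \<and>
     dual_norm_formula H ipH Hm ipm Hp ipp \<and> dual_norm_formula H ipH Hp ipp Hm ipm"

text \<open>\<open>pair\<close> is the \<open>\<HH>\<close>-pairing on \<open>Hm \<times> Hp\<close>: the (unique) bounded sesquilinear extension of
  \<open>(\<cdot>|\<cdot>)\<^sub>\<HH>\<close> from \<open>(H \<inter> Hm) \<times> (H \<inter> Hp)\<close>.\<close>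
definition is_pairing :: "'h::cvec set \<Rightarrow> ('h \<Rightarrow> 'h \<Rightarrow> complex) \<Rightarrow> 'h set \<Rightarrow> ('h \<Rightarrow> 'h \<Rightarrow> complex) \<Rightarrow> 'h set \<Rightarrow> ('h \<Rightarrow> 'h \<Rightarrow> complex) \<Rightarrow> ('h \<Rightarrow> 'h \<Rightarrow> complex) \<Rightarrow> bool" where
  "is_pairing H ipH Hm ipm Hp ipp pair \<longleftrightarrow>
     (\<forall>a\<in>Hm. \<forall>a'\<in>Hm. \<forall>b\<in>Hp. pair (a + a') b = pair a b + pair a' b) \<and>
     (\<forall>c. \<forall>a\<in>Hm. \<forall>b\<in>Hp. pair (c *\<^sub>C a) b = c * pair a b) \<and>
     (\<forall>a\<in>Hm. \<forall>b\<in>Hp. \<forall>b'\<in>Hp. pair a (b + b') = pair a b + pair a b') \<and>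
     (\<forall>c. \<forall>a\<in>Hm. \<forall>b\<in>Hp. pair a (c *\<^sub>C b) = cnj c * pair a b) \<and>
     (\<exists>C. \<forall>a\<in>Hm. \<forall>b\<in>Hp. cmod (pair a b) \<le> C * nrm ipm a * nrm ipp b) \<and>
     (\<forall>a\<in>H \<inter> Hm. \<forall>b\<in>H \<inter> Hp. pair a b = ipH a b)"

text \<open>m-boundary tuple \<open>(Hm, H, \<Gamma>\<^sub>0, \<Gamma>\<^sub>1)\<close> for the operator \<open>(DS, TS)\<close> (= \<open>M*\<close>) in the
  Hilbert space \<open>(UNIV, ipX)\<close>.  Here \<open>\<langle>\<Gamma>\<^sub>1 f|\<Gamma>\<^sub>0 g\<rangle> = cnj \<langle>\<Gamma>\<^sub>0 g|\<Gamma>\<^sub>1 f\<rangle>\<close>.\<close>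
definition m_boundary_tuple ::
  "('x::cvec \<Rightarrow> 'x \<Rightarrow> complex) \<Rightarrow> 'x set \<Rightarrow> ('x \<Rightarrow> 'x) \<Rightarrow>
   'h::cvec set \<Rightarrow> ('h \<Rightarrow> 'h \<Rightarrow> complex) \<Rightarrow> 'h set \<Rightarrow> ('h \<Rightarrow> 'h \<Rightarrow> complex) \<Rightarrow> 'h set \<Rightarrow> ('h \<Rightarrow> 'h \<Rightarrow> complex) \<Rightarrow>
   ('h \<Rightarrow> 'h \<Rightarrow> complex) \<Rightarrow> ('x \<Rightarrow> 'h) \<Rightarrow> ('x \<Rightarrow> 'h) \<Rightarrow> bool" where
  "m_boundary_tuple ipX DS TS H ipH Hm ipm Hp ipp pair G0 G1 \<longleftrightarrow>
     dual_m_order H ipH Hm ipm Hp ipp \<and> is_pairing H ipH Hm ipm Hp ipp pair \<and>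
     linear_on DS G0 \<and> linear_on DS G1 \<and>
     (\<lambda>f. (G0 f, G1 f)) ` DS = Hm \<times> Hp \<and>
     (\<forall>f\<in>DS. \<forall>g\<in>DS. ipX (TS f) g - ipX f (TS g) = cnj (pair (G0 g) (G1 f)) - pair (G0 f) (G1 g))"

definition contraction_on :: "'h::cvec set \<Rightarrow> ('h \<Rightarrow> 'h \<Rightarrow> complex) \<Rightarrow> ('h \<Rightarrow> 'h) \<Rightarrow> bool" where
  "contraction_on H ip K \<longleftrightarrow> linear_on H K \<and> K ` H \<subseteq> H \<and> (\<forall>h\<in>H. nrm ip (K h) \<le> nrm ip h)"

definition unitary_on :: "'h::cvec set \<Rightarrow> ('h \<Rightarrow> 'h \<Rightarrow> complex) \<Rightarrow> ('h \<Rightarrow> 'h) \<Rightarrow> bool" where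
  "unitary_on H ip K \<longleftrightarrow> linear_on H K \<and> bij_betw K H H \<and> (\<forall>f\<in>H. \<forall>g\<in>H. ip (K f) (K g) = ip f g)"

definition lin_homeo :: "'h::cvec set \<Rightarrow> ('h \<Rightarrow> 'h \<Rightarrow> complex) \<Rightarrow> 'h set \<Rightarrow> ('h \<Rightarrow> 'h \<Rightarrow> complex) \<Rightarrow> ('h \<Rightarrow> 'h) \<Rightarrow> bool" where
  "lin_homeo H ipH Hm ipm V \<longleftrightarrow> linear_on H V \<and> bij_betw V H Hm \<and>
     bounded_on ipH ipm H V \<and> bounded_on ipm ipH Hm (inv_into H V)"

definition pairing_adjoint :: "'h::cvec set \<Rightarrow> ('h \<Rightarrow> 'h \<Rightarrow> complex) \<Rightarrow> 'h set \<Rightarrow> ('h \<Rightarrow> 'h \<Rightarrow> complex) \<Rightarrow> ('h \<Rightarrow> 'h) \<Rightarrow> ('h \<Rightarrow> 'h) \<Rightarrow> bool" where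
  "pairing_adjoint H ipH Hp pair V Vs \<longleftrightarrow> Vs ` Hp \<subseteq> H \<and>
     (\<forall>f\<in>H. \<forall>g\<in>Hp. pair (V f) g = ipH f (Vs g))"

definition bc_dom :: "('x \<times> 'x) set \<Rightarrow> 'h set \<Rightarrow> ('h \<Rightarrow> 'h) \<Rightarrow> ('h \<Rightarrow> 'h) \<Rightarrow> ('x \<times> 'x \<Rightarrow> 'h) \<Rightarrow> ('x \<times> 'x \<Rightarrow> 'h) \<Rightarrow> ('h::cvec \<Rightarrow> 'h) \<Rightarrow> ('x \<times> 'x) set" where
  "bc_dom DS H V Vs G0 G1 K =
     {\<psi>\<in>DS. let a = inv_into H V (G0 \<psi>); b = Vs (G1 \<psi>) in
        (K a + a) + \<i> *\<^sub>C (K b - b) = 0}"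

end

theory Submission
  imports Defs
begin

text \<open>Write \<open>a = V\<inverse> \<Gamma>\<^sub>0 \<psi>\<close> and \<open>b = V\<^sup># \<Gamma>\<^sub>1 \<psi>\<close>.  The boundary form becomes \<open>(b f|a g) - (a f|b g)\<close>
  in \<open>\<HH>\<close>, and for the Cayley combinations \<open>u = a + i b\<close>, \<open>w = a - i b\<close> Green's identity reads
  \<open>(M* f|g) - (f|M* g) = - (i/2) ((u f|u g) - (w f|w g))\<close>, with \<open>(u, w)\<close> mapping \<open>dom M*\<close> onto
  \<open>\<HH> \<times> \<HH>\<close>.  Hence \<open>Im (M* \<psi>|\<psi>) = (\<parallel>w \<psi>\<parallel>\<^sup>2 - \<parallel>u \<psi>\<parallel>\<^sup>2) / 4\<close>, and the boundary condition of
  the theorem is \<open>K u + w = 0\<close>.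

  A dissipative extension of \<open>M\<close> is a restriction of \<open>M*\<close> (Phillips) on which \<open>\<parallel>w\<parallel> \<le> \<parallel>u\<parallel>\<close>.
  If it is m-dissipative it is maximal with this property, which forces \<open>u\<close> to map it onto
  \<open>\<HH>\<close>; so it is the graph \<open>w = - K u\<close> of a contraction \<open>K\<close>.  Conversely, on such a graph
  \<open>M* - \<lambda>\<close> (\<open>Im \<lambda> > 0\<close>) is bounded below by \<open>Im \<lambda>\<close>, has closed range as \<open>M*\<close> is closed,
  and its range is dense: an orthogonal vector would be an eigenvector of \<open>M*\<close> for
  \<open>\<lambda>\<^sup>*\<close> with \<open>\<parallel>u\<parallel> \<le> \<parallel>w\<parallel>\<close>.  Finally the adjoint of the restriction is the restriction to
  \<open>{(h|u \<psi>) = - (K h|w \<psi>) for all h}\<close>, which equals the graph exactly when \<open>K\<close> is unitary.\<close>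

section \<open>Complex vector spaces, subspaces and linear maps\<close>

lemma scaleC_zero_left [simp]: "0 *\<^sub>C (x::'a::cvec) = 0"
proof -
  have "0 *\<^sub>C x = 0 *\<^sub>C x + 0 *\<^sub>C x" by (simp flip: scaleC_add_left)
  then show ?thesis by simp
qed

lemma scaleC_zero_right [simp]: "c *\<^sub>C (0::'a::cvec) = 0"
proof -
  have "c *\<^sub>C (0::'a) = c *\<^sub>C 0 + c *\<^sub>C 0" by (simp flip: scaleC_add_right)
  then show ?thesis by simp
qed

lemma scaleC_minus_right: "c *\<^sub>C (- (x::'a::cvec)) = - (c *\<^sub>C x)"
proof -
  have "c *\<^sub>C (- x) + c *\<^sub>C x = 0" by (simp flip: scaleC_add_right)
  then show ?thesis by (simp add: eq_neg_iff_add_eq_0)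
qed

lemma scaleC_minus_left: "(- c) *\<^sub>C (x::'a::cvec) = - (c *\<^sub>C x)"
proof -
  have "(- c) *\<^sub>C x + c *\<^sub>C x = 0" by (simp flip: scaleC_add_left)
  then show ?thesis by (simp add: eq_neg_iff_add_eq_0)
qed

lemma scaleC_diff_right: "c *\<^sub>C ((x::'a::cvec) - y) = c *\<^sub>C x - c *\<^sub>C y"
  by (metis diff_conv_add_uminus scaleC_add_right scaleC_minus_right)

lemma scaleC_diff_left: "(c - d) *\<^sub>C (x::'a::cvec) = c *\<^sub>C x - d *\<^sub>C x"
  by (metis diff_conv_add_uminus scaleC_add_left scaleC_minus_left)

lemma scaleC_minus1: "(-1) *\<^sub>C (x::'a::cvec) = - x"
  by (simp add: scaleC_minus_left scaleC_one)

lemma scaleC_two: "(2::complex) *\<^sub>C (x::'a::cvec) = x + x"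
  using scaleC_add_left[of 1 1 x] by (simp add: scaleC_one)

lemma subspaceC_zero: "subspaceC D \<Longrightarrow> 0 \<in> D"
  unfolding subspaceC_def by blast

lemma subspaceC_add: "subspaceC D \<Longrightarrow> x \<in> D \<Longrightarrow> y \<in> D \<Longrightarrow> x + y \<in> D"
  unfolding subspaceC_def by blast

lemma subspaceC_scale: "subspaceC D \<Longrightarrow> x \<in> D \<Longrightarrow> c *\<^sub>C x \<in> D"
  unfolding subspaceC_def by blast

lemma subspaceC_minus: "subspaceC D \<Longrightarrow> x \<in> D \<Longrightarrow> - x \<in> D"
  using subspaceC_scale[of D x "-1"] by (simp add: scaleC_minus1)

lemma subspaceC_diff: "subspaceC D \<Longrightarrow> x \<in> D \<Longrightarrow> y \<in> D \<Longrightarrow> x - y \<in> D"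
  using subspaceC_add[of D x "- y"] subspaceC_minus[of D y] by simp

lemma subspaceC_UNIV: "subspaceC UNIV"
  unfolding subspaceC_def by blast

lemma linear_on_subspaceC: "linear_on D f \<Longrightarrow> subspaceC D"
  unfolding linear_on_def by blast

lemma linear_on_add: "linear_on D f \<Longrightarrow> x \<in> D \<Longrightarrow> y \<in> D \<Longrightarrow> f (x + y) = f x + f y"
  unfolding linear_on_def by blast

lemma linear_on_scale: "linear_on D f \<Longrightarrow> x \<in> D \<Longrightarrow> f (c *\<^sub>C x) = c *\<^sub>C f x"
  unfolding linear_on_def by blast

lemma linear_on_zero: "linear_on D f \<Longrightarrow> f 0 = 0"
  using linear_on_scale[of D f 0 0] linear_on_subspaceC subspaceC_zero by fastforce

lemma linear_on_minus: "linear_on D f \<Longrightarrow> x \<in> D \<Longrightarrow> f (- x) = - f x"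
  using linear_on_scale[of D f x "-1"] by (simp add: scaleC_minus1)

lemma linear_on_diff: "linear_on D f \<Longrightarrow> x \<in> D \<Longrightarrow> y \<in> D \<Longrightarrow> f (x - y) = f x - f y"
  using linear_on_add[of D f x "- y"] linear_on_minus[of D f y] linear_on_subspaceC subspaceC_minus
  by fastforce

lemma linear_on_subset: "linear_on D f \<Longrightarrow> subspaceC D' \<Longrightarrow> D' \<subseteq> D \<Longrightarrow> linear_on D' f"
  unfolding linear_on_def by blast

lemma linear_onI:
  assumes "subspaceC D" "\<And>x y. x \<in> D \<Longrightarrow> y \<in> D \<Longrightarrow> f (x + y) = f x + f y"
    and "\<And>c x. x \<in> D \<Longrightarrow> f (c *\<^sub>C x) = c *\<^sub>C f x"
  shows "linear_on D f"
  unfolding linear_on_def using assms by blast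

lemma linear_on_comp:
  assumes f: "linear_on D f" and g: "linear_on E g" and fD: "f ` D \<subseteq> E"
  shows "linear_on D (\<lambda>x. g (f x))"
proof (rule linear_onI[OF linear_on_subspaceC[OF f]])
  show "g (f (x + y)) = g (f x) + g (f y)" if "x \<in> D" "y \<in> D" for x y
    using linear_on_add[OF f that] linear_on_add[OF g] fD that by auto
  show "g (f (c *\<^sub>C x)) = c *\<^sub>C g (f x)" if "x \<in> D" for c x
    using linear_on_scale[OF f that] linear_on_scale[OF g] fD that by auto
qed

lemma linear_on_add_scale:
  assumes f: "linear_on D f" and g: "linear_on D g"
  shows "linear_on D (\<lambda>x. f x + c *\<^sub>C g x)"
proof (rule linear_onI[OF linear_on_subspaceC[OF f]])
  show "f (x + y) + c *\<^sub>C g (x + y) = (f x + c *\<^sub>C g x) + (f y + c *\<^sub>C g y)" if "x \<in> D" "y \<in> D" for x y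
    using linear_on_add[OF f that] linear_on_add[OF g that] by (simp add: scaleC_add_right algebra_simps)
  show "f (d *\<^sub>C x) + c *\<^sub>C g (d *\<^sub>C x) = d *\<^sub>C (f x + c *\<^sub>C g x)" if "x \<in> D" for d x
    using linear_on_scale[OF f that] linear_on_scale[OF g that]
    by (simp add: scaleC_add_right scaleC_scaleC mult.commute)
qed

lemma linear_on_uminus: "linear_on D f \<Longrightarrow> linear_on D (\<lambda>x. - f x)"
  unfolding linear_on_def by (simp add: scaleC_minus_right)

lemma subspaceC_image: "linear_on D f \<Longrightarrow> subspaceC (f ` D)"
  unfolding subspaceC_def
proof (intro conjI ballI allI)
  assume f: "linear_on D f"
  then have D: "subspaceC D" by (rule linear_on_subspaceC)
  show "0 \<in> f ` D" using f D linear_on_zero subspaceC_zero by (metis image_eqI)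
  show "a + b \<in> f ` D" if "a \<in> f ` D" "b \<in> f ` D" for a b
    using that f D linear_on_add subspaceC_add by (smt (verit) image_iff)
  show "c *\<^sub>C a \<in> f ` D" if "a \<in> f ` D" for c a
    using that f D linear_on_scale subspaceC_scale by (smt (verit) image_iff)
qed

lemma subspaceC_adjoin:
  assumes D: "subspaceC D"
  shows "subspaceC {f + c *\<^sub>C p | f c. f \<in> D}"
  unfolding subspaceC_def
proof (intro conjI allI ballI)
  show "0 \<in> {f + c *\<^sub>C p | f c. f \<in> D}"
    by (intro CollectI exI[of _ 0] exI[of _ "0::complex"]) (simp add: subspaceC_zero[OF D])
  show "a + b \<in> {f + c *\<^sub>C p | f c. f \<in> D}"
    if a: "a \<in> {f + c *\<^sub>C p | f c. f \<in> D}" and b: "b \<in> {f + c *\<^sub>C p | f c. f \<in> D}" for a b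
  proof -
    obtain f1 c1 f2 c2 where "f1 \<in> D" "f2 \<in> D" "a = f1 + c1 *\<^sub>C p" "b = f2 + c2 *\<^sub>C p"
      using a b by blast
    then show ?thesis using subspaceC_add[OF D]
      by (intro CollectI exI[of _ "f1 + f2"] exI[of _ "c1 + c2"]) (simp add: scaleC_add_left algebra_simps)
  qed
  show "d *\<^sub>C a \<in> {f + c *\<^sub>C p | f c. f \<in> D}" if a: "a \<in> {f + c *\<^sub>C p | f c. f \<in> D}" for d a
  proof -
    obtain f1 c1 where "f1 \<in> D" "a = f1 + c1 *\<^sub>C p" using a by blast
    then show ?thesis using subspaceC_scale[OF D]
      by (intro CollectI exI[of _ "d *\<^sub>C f1"] exI[of _ "d * c1"]) (simp add: scaleC_add_right scaleC_scaleC)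
  qed
qed

lemma obtain_preimage_seq:
  assumes "\<And>n. ys n \<in> f ` D"
  obtains xs where "\<And>n. xs n \<in> D" and "\<And>n. f (xs n) = ys n"
proof -
  have "\<forall>n. \<exists>x. x \<in> D \<and> f x = ys n"
  proof
    fix n
    obtain x where "x \<in> D" "ys n = f x" using assms[of n] by (rule imageE)
    then show "\<exists>x. x \<in> D \<and> f x = ys n" by auto
  qed
  then obtain xs where "\<forall>n. xs n \<in> D \<and> f (xs n) = ys n" by (rule choice[THEN exE])
  then show ?thesis using that by blast
qed

section \<open>Inner product spaces\<close>

locale inner_product_space =
  fixes H :: "'a::cvec set" and ip :: "'a \<Rightarrow> 'a \<Rightarrow> complex"
  assumes inner_product: "inner_product_on H ip"
begin

lemma subspace: "subspaceC H"
  using inner_product unfolding inner_product_on_def by meson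

lemma zero_in [simp]: "0 \<in> H" by (rule subspaceC_zero[OF subspace])
lemma add_in [simp]: "x \<in> H \<Longrightarrow> y \<in> H \<Longrightarrow> x + y \<in> H" by (rule subspaceC_add[OF subspace])
lemma diff_in [simp]: "x \<in> H \<Longrightarrow> y \<in> H \<Longrightarrow> x - y \<in> H" by (rule subspaceC_diff[OF subspace])
lemma minus_in [simp]: "x \<in> H \<Longrightarrow> - x \<in> H" by (rule subspaceC_minus[OF subspace])
lemma scale_in [simp]: "x \<in> H \<Longrightarrow> c *\<^sub>C x \<in> H" by (rule subspaceC_scale[OF subspace])

lemma ip_addL: "x \<in> H \<Longrightarrow> y \<in> H \<Longrightarrow> z \<in> H \<Longrightarrow> ip (x + y) z = ip x z + ip y z"
  using inner_product unfolding inner_product_on_def by meson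
lemma ip_scaleL: "x \<in> H \<Longrightarrow> y \<in> H \<Longrightarrow> ip (c *\<^sub>C x) y = c * ip x y"
  using inner_product unfolding inner_product_on_def by meson
lemma ip_sym: "x \<in> H \<Longrightarrow> y \<in> H \<Longrightarrow> ip y x = cnj (ip x y)"
  using inner_product unfolding inner_product_on_def by meson
lemma ip_self_Re: "x \<in> H \<Longrightarrow> Re (ip x x) \<ge> 0"
  using inner_product unfolding inner_product_on_def by meson
lemma ip_self_Im: "x \<in> H \<Longrightarrow> Im (ip x x) = 0"
  using inner_product unfolding inner_product_on_def by meson
lemma ip_self_zero: "x \<in> H \<Longrightarrow> ip x x = 0 \<Longrightarrow> x = 0"
  using inner_product unfolding inner_product_on_def by meson

lemma ip_addR: "x \<in> H \<Longrightarrow> y \<in> H \<Longrightarrow> z \<in> H \<Longrightarrow> ip z (x + y) = ip z x + ip z y"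
  using ip_sym[of "x + y" z] ip_sym[of x z] ip_sym[of y z] ip_addL[of x y z] by simp
lemma ip_scaleR: "x \<in> H \<Longrightarrow> y \<in> H \<Longrightarrow> ip x (c *\<^sub>C y) = cnj c * ip x y"
  using ip_sym[of "c *\<^sub>C y" x] ip_sym[of y x] ip_scaleL[of y x c] by simp
lemma ip_zeroL [simp]: "y \<in> H \<Longrightarrow> ip 0 y = 0"
  using ip_scaleL[of 0 y 0] by simp
lemma ip_zeroR [simp]: "y \<in> H \<Longrightarrow> ip y 0 = 0"
  using ip_scaleR[of y 0 0] by simp
lemma ip_minusL: "x \<in> H \<Longrightarrow> y \<in> H \<Longrightarrow> ip (- x) y = - ip x y"
  using ip_scaleL[of x y "-1"] by (simp add: scaleC_minus1)
lemma ip_minusR: "x \<in> H \<Longrightarrow> y \<in> H \<Longrightarrow> ip y (- x) = - ip y x"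
  using ip_scaleR[of y x "-1"] by (simp add: scaleC_minus1)
lemma ip_diffL: "x \<in> H \<Longrightarrow> y \<in> H \<Longrightarrow> z \<in> H \<Longrightarrow> ip (x - y) z = ip x z - ip y z"
  using ip_addL[of x "- y" z] ip_minusL[of y z] by simp
lemma ip_diffR: "x \<in> H \<Longrightarrow> y \<in> H \<Longrightarrow> z \<in> H \<Longrightarrow> ip z (x - y) = ip z x - ip z y"
  using ip_addR[of x "- y" z] ip_minusR[of y z] by simp

abbreviation "nm \<equiv> nrm ip"

lemma nrm_ge0 [simp]: "x \<in> H \<Longrightarrow> nm x \<ge> 0"
  unfolding nrm_def using ip_self_Re[of x] by simp
lemma nrm_sq: "x \<in> H \<Longrightarrow> (nm x)\<^sup>2 = Re (ip x x)"
  unfolding nrm_def using ip_self_Re[of x] by simp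
lemma ip_self: "x \<in> H \<Longrightarrow> ip x x = complex_of_real ((nm x)\<^sup>2)"
  by (simp add: complex_eq_iff ip_self_Im nrm_sq)
lemma nrm_zero [simp]: "nm 0 = 0"
  unfolding nrm_def by simp
lemma nrm_eq0: "x \<in> H \<Longrightarrow> nm x = 0 \<longleftrightarrow> x = 0"
  using ip_self[of x] ip_self_zero[of x] by auto
lemma nrm_le0_imp_zero: "x \<in> H \<Longrightarrow> nm x \<le> 0 \<Longrightarrow> x = 0"
  using nrm_eq0[of x] nrm_ge0[of x] by linarith

lemma nrm_scale: "x \<in> H \<Longrightarrow> nm (c *\<^sub>C x) = cmod c * nm x"
proof -
  assume x: "x \<in> H"
  have "ip (c *\<^sub>C x) (c *\<^sub>C x) = (c * cnj c) * ip x x"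
    using x by (simp add: ip_scaleL ip_scaleR)
  also have "c * cnj c = complex_of_real ((cmod c)\<^sup>2)" using complex_norm_square[of c] by simp
  finally have "Re (ip (c *\<^sub>C x) (c *\<^sub>C x)) = (cmod c)\<^sup>2 * Re (ip x x)"
    using x ip_self by simp
  then show ?thesis unfolding nrm_def by (simp add: real_sqrt_mult)
qed

lemma nrm_minus: "x \<in> H \<Longrightarrow> nm (- x) = nm x"
  using nrm_scale[of x "-1"] by (simp add: scaleC_minus1)
lemma nrm_commute: "x \<in> H \<Longrightarrow> y \<in> H \<Longrightarrow> nm (x - y) = nm (y - x)"
  using nrm_minus[of "y - x"] by simp

lemma nrm_add_sq: "x \<in> H \<Longrightarrow> y \<in> H \<Longrightarrow> (nm (x + y))\<^sup>2 = (nm x)\<^sup>2 + (nm y)\<^sup>2 + 2 * Re (ip x y)"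
proof -
  assume x: "x \<in> H" and y: "y \<in> H"
  have "ip (x + y) (x + y) = ip x x + ip y y + (ip x y + cnj (ip x y))"
    using x y by (simp add: ip_addL ip_addR ip_sym[of x y])
  then show ?thesis using x y by (simp add: nrm_sq)
qed

lemma nrm_diff_sq: "x \<in> H \<Longrightarrow> y \<in> H \<Longrightarrow> (nm (x - y))\<^sup>2 = (nm x)\<^sup>2 + (nm y)\<^sup>2 - 2 * Re (ip x y)"
  using nrm_add_sq[of x "- y"] by (simp add: nrm_minus ip_minusR)

lemma parallelogram:
  "u \<in> H \<Longrightarrow> v \<in> H \<Longrightarrow> (nm (u + v))\<^sup>2 + (nm (u - v))\<^sup>2 = 2 * (nm u)\<^sup>2 + 2 * (nm v)\<^sup>2"
  by (simp add: nrm_add_sq nrm_diff_sq)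

lemma cauchy_schwarz: "x \<in> H \<Longrightarrow> y \<in> H \<Longrightarrow> cmod (ip x y) \<le> nm x * nm y"
proof (cases "y = 0")
  case False
  assume x: "x \<in> H" and y: "y \<in> H"
  define r where "r = (nm y)\<^sup>2"
  define k where "k = cmod (ip x y)"
  define t where "t = ip x y / complex_of_real r"
  have "nm y \<noteq> 0" using False y nrm_eq0 by blast
  then have r0: "r > 0" unfolding r_def by simp
  have t_ip: "cnj t * ip x y = complex_of_real (k\<^sup>2 / r)"
    unfolding t_def k_def using complex_norm_square[of "ip x y"] by (simp add: mult.commute)
  have t_nrm: "cmod t = k / r" unfolding t_def k_def using r0 by (simp add: norm_divide)
  have "0 \<le> (nm (x - t *\<^sub>C y))\<^sup>2" by (rule zero_le_power2)
  also have "\<dots> = (nm x)\<^sup>2 + (k / r)\<^sup>2 * r - 2 * (k\<^sup>2 / r)"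
    unfolding nrm_diff_sq[OF x scale_in[OF y]] nrm_scale[OF y] ip_scaleR[OF x y] t_ip t_nrm
      Re_complex_of_real power_mult_distrib r_def by (rule refl)
  also have "\<dots> = (nm x)\<^sup>2 - k\<^sup>2 / r"
    using r0 by (simp add: power_divide power2_eq_square)
  finally have "k\<^sup>2 \<le> (nm x * nm y)\<^sup>2"
    using r0 unfolding r_def by (simp add: pos_divide_le_eq power_mult_distrib)
  then show ?thesis unfolding k_def
    by (rule power2_le_imp_le) (use x y in simp)
qed simp

lemma Re_ip_le: "x \<in> H \<Longrightarrow> y \<in> H \<Longrightarrow> Re (ip x y) \<le> nm x * nm y"
  using cauchy_schwarz[of x y] abs_Re_le_cmod[of "ip x y"] by linarith

lemma nrm_triangle: "x \<in> H \<Longrightarrow> y \<in> H \<Longrightarrow> nm (x + y) \<le> nm x + nm y"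
proof -
  assume x: "x \<in> H" and y: "y \<in> H"
  have "(nm (x + y))\<^sup>2 \<le> (nm x + nm y)\<^sup>2"
    unfolding nrm_add_sq[OF x y] power2_sum using Re_ip_le[OF x y] by linarith
  then show ?thesis by (rule power2_le_imp_le) (use x y in simp)
qed

lemma nrm_triangle3: "x \<in> H \<Longrightarrow> y \<in> H \<Longrightarrow> z \<in> H \<Longrightarrow> nm (x - z) \<le> nm (x - y) + nm (y - z)"
  using nrm_triangle[of "x - y" "y - z"] by simp

lemma nrm_rev_triangle: "x \<in> H \<Longrightarrow> y \<in> H \<Longrightarrow> \<bar>nm x - nm y\<bar> \<le> nm (x - y)"
  using nrm_triangle[of "x - y" y] nrm_triangle[of "y - x" x] nrm_commute[of x y] by simp

lemma ip_eq_zero_all: "x \<in> H \<Longrightarrow> (\<And>y. y \<in> H \<Longrightarrow> ip y x = 0) \<Longrightarrow> x = 0"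
  using ip_self_zero by blast

lemma ip_eq_zero_all': "x \<in> H \<Longrightarrow> (\<And>y. y \<in> H \<Longrightarrow> ip x y = 0) \<Longrightarrow> x = 0"
  using ip_self_zero by blast

lemma ip_ext: "x \<in> H \<Longrightarrow> x' \<in> H \<Longrightarrow> (\<And>y. y \<in> H \<Longrightarrow> ip y x = ip y x') \<Longrightarrow> x = x'"
  using ip_eq_zero_all[of "x - x'"] by (simp add: ip_diffR)

end

section \<open>Convergence and closed subspaces\<close>

lemma cauchy_by_bound:
  assumes ys: "cauchy ip' ys" and C: "C \<ge> 0"
    and bound: "\<And>m n. nrm ip (xs m - xs n) \<le> C * nrm ip' (ys m - ys n)"
  shows "cauchy ip xs"
  unfolding cauchy_def
proof (intro allI impI)
  fix e :: real assume e: "e > 0"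
  then have "e / (C + 1) > 0" using C by simp
  then obtain N where N: "\<forall>m\<ge>N. \<forall>n\<ge>N. nrm ip' (ys m - ys n) < e / (C + 1)"
    using ys unfolding cauchy_def by blast
  have "nrm ip (xs m - xs n) < e" if "m \<ge> N" "n \<ge> N" for m n
  proof -
    have "nrm ip (xs m - xs n) \<le> C * (e / (C + 1))"
      using bound[of m n] mult_left_mono[OF less_imp_le[OF N[rule_format, OF that]] C] by linarith
    also have "\<dots> < e" using C e by (simp add: field_simps)
    finally show ?thesis .
  qed
  then show "\<exists>N. \<forall>m\<ge>N. \<forall>n\<ge>N. nrm ip (xs m - xs n) < e" by blast
qed

context inner_product_space
begin

lemma conv_by_bound:
  assumes xs: "\<And>n. xs n \<in> H" and x: "x \<in> H" and ys: "conv ip' ys y"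
    and bound: "\<And>n. nm (xs n - x) \<le> C * nrm ip' (ys n - y)"
  shows "conv ip xs x"
  unfolding conv_def
proof (rule Lim_null_comparison[OF always_eventually])
  show "\<forall>n. norm (nm (xs n - x)) \<le> C * nrm ip' (ys n - y)" using bound xs x by simp
  show "(\<lambda>n. C * nrm ip' (ys n - y)) \<longlonglongrightarrow> 0"
    using tendsto_mult_right_zero[OF ys[unfolded conv_def]] .
qed

lemma conv_unique:
  assumes xs: "\<And>n. xs n \<in> H" and x: "x \<in> H" and y: "y \<in> H"
    and cx: "conv ip xs x" and cy: "conv ip xs y"
  shows "x = y"
proof -
  have "(\<lambda>n. nm (xs n - x) + nm (xs n - y)) \<longlonglongrightarrow> 0 + 0"
    using cx cy unfolding conv_def by (intro tendsto_add)
  moreover have "nm (x - y) \<le> nm (xs n - x) + nm (xs n - y)" for n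
    using nrm_triangle3[of x "xs n" y] nrm_commute[of x "xs n"] xs x y by simp
  ultimately have "nm (x - y) \<le> 0" by (intro LIMSEQ_le_const) auto
  then show ?thesis using nrm_le0_imp_zero[of "x - y"] x y by simp
qed

lemma conv_add:
  assumes xs: "\<And>n. xs n \<in> H" and ys: "\<And>n. ys n \<in> H" and x: "x \<in> H" and y: "y \<in> H"
    and cx: "conv ip xs x" and cy: "conv ip ys y"
  shows "conv ip (\<lambda>n. xs n + ys n) (x + y)"
  unfolding conv_def
proof (rule Lim_null_comparison[OF always_eventually])
  show "\<forall>n. norm (nm (xs n + ys n - (x + y))) \<le> nm (xs n - x) + nm (ys n - y)"
    using nrm_triangle[of "xs n - x" "ys n - y" for n] xs ys x y by (simp add: algebra_simps)
  show "(\<lambda>n. nm (xs n - x) + nm (ys n - y)) \<longlonglongrightarrow> 0"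
    using tendsto_add[OF cx[unfolded conv_def] cy[unfolded conv_def]] by simp
qed

lemma conv_scale:
  assumes xs: "\<And>n. xs n \<in> H" and x: "x \<in> H" and cx: "conv ip xs x"
  shows "conv ip (\<lambda>n. c *\<^sub>C xs n) (c *\<^sub>C x)"
  by (rule conv_by_bound[OF _ _ cx, of _ _ "cmod c"])
    (use xs x nrm_scale in \<open>simp_all flip: scaleC_diff_right\<close>)

lemma conv_ipL:
  assumes xs: "\<And>n. xs n \<in> H" and x: "x \<in> H" and y: "y \<in> H" and cx: "conv ip xs x"
  shows "(\<lambda>n. ip (xs n) y) \<longlonglongrightarrow> ip x y"
proof -
  have "(\<lambda>n. ip (xs n) y - ip x y) \<longlonglongrightarrow> 0"
  proof (rule Lim_null_comparison[OF always_eventually])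
    show "\<forall>n. norm (ip (xs n) y - ip x y) \<le> nm (xs n - x) * nm y"
      using cauchy_schwarz[of "xs n - x" y for n] xs x y by (simp add: ip_diffL)
    show "(\<lambda>n. nm (xs n - x) * nm y) \<longlonglongrightarrow> 0"
      using tendsto_mult_left_zero[OF cx[unfolded conv_def]] .
  qed
  then show ?thesis by (simp add: LIM_zero_iff)
qed

lemma conv_ipR:
  assumes xs: "\<And>n. xs n \<in> H" and x: "x \<in> H" and y: "y \<in> H" and cx: "conv ip xs x"
  shows "(\<lambda>n. ip y (xs n)) \<longlonglongrightarrow> ip y x"
  using tendsto_cnj[OF conv_ipL[OF xs x y cx]] ip_sym[of _ y] xs x y by simp

lemma conv_nrm:
  assumes xs: "\<And>n. xs n \<in> H" and x: "x \<in> H" and cx: "conv ip xs x"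
  shows "(\<lambda>n. nm (xs n)) \<longlonglongrightarrow> nm x"
proof -
  have "(\<lambda>n. nm (xs n) - nm x) \<longlonglongrightarrow> 0"
    by (rule Lim_null_comparison[OF always_eventually, of _ "\<lambda>n. nm (xs n - x)"])
      (use cx nrm_rev_triangle xs x in \<open>auto simp: conv_def\<close>)
  then show ?thesis by (simp add: LIM_zero_iff)
qed

lemma conv_affine_nrm:
  "(\<And>n. xs n \<in> H) \<Longrightarrow> x \<in> H \<Longrightarrow> conv ip xs x \<Longrightarrow> a \<in> H \<Longrightarrow>
    (\<lambda>n. nm (a + c *\<^sub>C xs n)) \<longlonglongrightarrow> nm (a + c *\<^sub>C x)"
proof -
  assume xs: "\<And>n. xs n \<in> H" and x: "x \<in> H" and cx: "conv ip xs x" and a: "a \<in> H"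
  have "conv ip (\<lambda>n. a) a" unfolding conv_def by simp
  then have "conv ip (\<lambda>n. a + c *\<^sub>C xs n) (a + c *\<^sub>C x)"
    using conv_add[OF _ _ _ _ _ conv_scale[OF xs x cx]] xs x a by simp
  from conv_nrm[OF _ _ this] show ?thesis using xs x a by simp
qed

lemma conv_cauchy:
  assumes xs: "\<And>n. xs n \<in> H" and x: "x \<in> H" and cx: "conv ip xs x"
  shows "cauchy ip xs"
  unfolding cauchy_def
proof (intro allI impI)
  fix e :: real assume "e > 0"
  then obtain N where "\<forall>n\<ge>N. norm (nm (xs n - x) - 0) < e / 2"
    using LIMSEQ_D[OF cx[unfolded conv_def], of "e / 2"] by auto
  then have N: "\<And>n. n \<ge> N \<Longrightarrow> nm (xs n - x) < e / 2" by auto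
  have "nm (xs m - xs n) < e" if "m \<ge> N" "n \<ge> N" for m n
    using nrm_triangle3[of "xs m" x "xs n"] nrm_commute[of x "xs n"] N[OF that(1)] N[OF that(2)] xs x
    by simp
  then show "\<exists>N. \<forall>m\<ge>N. \<forall>n\<ge>N. nm (xs m - xs n) < e" by blast
qed

definition closed_subspace :: "'a set \<Rightarrow> bool" where
  "closed_subspace W \<longleftrightarrow> W \<subseteq> H \<and> subspaceC W \<and>
     (\<forall>xs x. (\<forall>n. xs n \<in> W) \<and> x \<in> H \<and> conv ip xs x \<longrightarrow> x \<in> W)"

lemma closed_subspaceI:
  assumes "W \<subseteq> H" "subspaceC W"
    and "\<And>xs x. (\<And>n. xs n \<in> W) \<Longrightarrow> x \<in> H \<Longrightarrow> conv ip xs x \<Longrightarrow> x \<in> W"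
  shows "closed_subspace W"
  unfolding closed_subspace_def using assms by blast

lemma dense_orth_zero:
  assumes dn: "dense_in ip D H" and x: "x \<in> H" and orth: "\<And>d. d \<in> D \<Longrightarrow> ip d x = 0"
  shows "x = 0"
proof -
  have "nm x \<le> e" if e: "e > 0" for e
  proof -
    obtain d where d: "d \<in> D" "nm (x - d) < e" using dn x e unfolding dense_in_def by blast
    have dH: "d \<in> H" using d dn unfolding dense_in_def by blast
    have "(nm x)\<^sup>2 = cmod (ip (x - d) x)"
      using orth[OF d(1)] x dH ip_self[OF x] by (simp add: ip_diffL norm_power)
    also have "\<dots> \<le> nm (x - d) * nm x" using cauchy_schwarz[of "x - d" x] x dH by simp
    also have "\<dots> \<le> e * nm x" using d(2) x by (simp add: mult_right_mono)
    finally have "nm x * nm x \<le> e * nm x" by (simp add: power2_eq_square)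
    then show ?thesis using x e by (cases "nm x = 0") (auto simp: less_le)
  qed
  then have "nm x \<le> 0" by (rule field_le_epsilon[where y = 0, simplified])
  then show ?thesis using nrm_le0_imp_zero x by blast
qed

lemma dense_ext:
  assumes dn: "dense_in ip D H" and x: "x \<in> H" and y: "y \<in> H"
    and eq: "\<And>d. d \<in> D \<Longrightarrow> ip d x = ip d y"
  shows "x = y"
proof -
  have "x - y = 0"
    by (rule dense_orth_zero[OF dn]) (use eq x y dn in \<open>auto simp: ip_diffR dense_in_def\<close>)
  then show ?thesis by simp
qed

lemma midpoint_bound:
  assumes x: "x \<in> H" and a: "a \<in> H" and b: "b \<in> H"
    and d: "0 \<le> d" "d \<le> nm (x - (1/2::complex) *\<^sub>C (a + b))"
  shows "(nm (a - b))\<^sup>2 \<le> 2 * (nm (x - a))\<^sup>2 + 2 * (nm (x - b))\<^sup>2 - 4 * d\<^sup>2"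
proof -
  have "(x - a) + (x - b) = (2::complex) *\<^sub>C (x - (1/2::complex) *\<^sub>C (a + b))"
    by (simp add: scaleC_diff_right scaleC_scaleC scaleC_one scaleC_two algebra_simps)
  then have "nm ((x - a) + (x - b)) = 2 * nm (x - (1/2::complex) *\<^sub>C (a + b))"
    using x a b by (simp add: nrm_scale)
  then have "4 * d\<^sup>2 \<le> (nm ((x - a) + (x - b)))\<^sup>2"
    using d by (simp add: power_mult_distrib power_mono)
  moreover have "(nm ((x - a) + (x - b)))\<^sup>2 + (nm (a - b))\<^sup>2 = 2 * (nm (x - a))\<^sup>2 + 2 * (nm (x - b))\<^sup>2"
    using parallelogram[of "x - a" "x - b"] nrm_commute[of a b] x a b by simp
  ultimately show ?thesis by linarith
qed

lemma minimizing_sequence_cauchy: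
  assumes W: "subspaceC W" "W \<subseteq> H" and x: "x \<in> H"
    and d: "0 \<le> d" "\<And>w. w \<in> W \<Longrightarrow> d \<le> nm (x - w)"
    and ws: "\<And>n. ws n \<in> W" "\<And>n. (nm (x - ws n))\<^sup>2 \<le> d\<^sup>2 + eps n" and eps: "eps \<longlonglongrightarrow> 0"
  shows "cauchy ip ws"
  unfolding cauchy_def
proof (intro allI impI)
  fix e :: real assume e: "e > 0"
  obtain N where N: "\<And>n. n \<ge> N \<Longrightarrow> eps n < e\<^sup>2 / 4"
    using order_tendstoD(2)[OF eps, of "e\<^sup>2 / 4"] e unfolding eventually_sequentially by auto
  have "nm (ws m - ws n) < e" if "m \<ge> N" "n \<ge> N" for m n
  proof -
    have "(1/2::complex) *\<^sub>C (ws m + ws n) \<in> W"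
      using W(1) ws(1) subspaceC_add subspaceC_scale by blast
    then have "(nm (ws m - ws n))\<^sup>2 \<le> 2 * (nm (x - ws m))\<^sup>2 + 2 * (nm (x - ws n))\<^sup>2 - 4 * d\<^sup>2"
      using midpoint_bound[OF x _ _ d(1)] d(2) ws(1) W(2) by blast
    also have "\<dots> < e\<^sup>2" using ws(2)[of m] ws(2)[of n] N[OF that(1)] N[OF that(2)] by linarith
    finally show ?thesis using power_less_imp_less_base e by fastforce
  qed
  then show "\<exists>N. \<forall>m\<ge>N. \<forall>n\<ge>N. nm (ws m - ws n) < e" by blast
qed

lemma closest_point_orthogonal:
  assumes W: "subspaceC W" "W \<subseteq> H" and x: "x \<in> H" and p: "p \<in> W"
    and closest: "\<And>w. w \<in> W \<Longrightarrow> nm (x - p) \<le> nm (x - w)" and w: "w \<in> W"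
  shows "ip w (x - p) = 0"
proof -
  define z where "z = x - p"
  define q where "q = ip z w"
  define s :: real where "s = 1 / ((nm w)\<^sup>2 + 1)"
  have wH: "w \<in> H" and zH: "z \<in> H" using w p W x unfolding z_def by auto
  have sq: "0 \<le> (nm w)\<^sup>2" by simp
  have s0: "s > 0" unfolding s_def using sq by (simp add: add_nonneg_pos)
  have s1: "s * (nm w)\<^sup>2 \<le> 1" unfolding s_def using sq by (simp add: divide_le_eq_1 add_nonneg_pos)
  have "p + (s * q) *\<^sub>C w \<in> W" using p w W(1) subspaceC_add subspaceC_scale by blast
  then have "(nm z)\<^sup>2 \<le> (nm (z - (s * q) *\<^sub>C w))\<^sup>2"
    using closest zH unfolding z_def by (simp add: power_mono algebra_simps)
  also have "\<dots> = (nm z)\<^sup>2 + (cmod (s * q) * nm w)\<^sup>2 - 2 * Re (cnj (s * q) * q)"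
    unfolding q_def using zH wH by (simp add: nrm_diff_sq nrm_scale ip_scaleR)
  also have "cnj (s * q) * q = complex_of_real (s * (cmod q)\<^sup>2)"
    using complex_norm_square[of q] by (simp add: mult.commute)
  also have "(cmod (s * q) * nm w)\<^sup>2 = s\<^sup>2 * (cmod q)\<^sup>2 * (nm w)\<^sup>2"
    using s0 by (simp add: norm_mult power_mult_distrib)
  finally have "2 * s * (cmod q)\<^sup>2 \<le> s * (cmod q)\<^sup>2 * (s * (nm w)\<^sup>2)"
    by (simp add: power2_eq_square mult_ac)
  also have "\<dots> \<le> s * (cmod q)\<^sup>2" using s1 s0 by (simp add: mult_left_le)
  finally have "q = 0" using s0 by (simp add: mult_le_0_iff)
  then show ?thesis using ip_sym[OF zH wH] unfolding q_def z_def by simp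
qed

end

locale hilbert_space = inner_product_space +
  assumes complete: "\<And>xs. (\<And>n. xs n \<in> H) \<Longrightarrow> cauchy ip xs \<Longrightarrow> \<exists>x\<in>H. conv ip xs x"

lemma hilbert_on_imp_hilbert_space: "hilbert_on H ip \<Longrightarrow> hilbert_space H ip"
  unfolding hilbert_on_def hilbert_space_def hilbert_space_axioms_def inner_product_space_def by blast

context hilbert_space
begin

lemma closest_point_exists:
  assumes W: "closed_subspace W" and x: "x \<in> H"
  shows "\<exists>p\<in>W. \<forall>w\<in>W. nm (x - p) \<le> nm (x - w)"
proof -
  have WH: "W \<subseteq> H" and Ws: "subspaceC W"
    and Wc: "\<And>xs x. \<forall>n. xs n \<in> W \<Longrightarrow> x \<in> H \<Longrightarrow> conv ip xs x \<Longrightarrow> x \<in> W"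
    using W unfolding closed_subspace_def by blast+
  define N where "N = (\<lambda>w. nm (x - w)) ` W"
  define d where "d = Inf N"
  define eps :: "nat \<Rightarrow> real" where "eps n = inverse (real (Suc n))" for n
  have Nne: "N \<noteq> {}" using Ws subspaceC_zero unfolding N_def by blast
  have Nbd: "bdd_below N" unfolding N_def using x WH by (intro bdd_belowI[of _ 0]) auto
  have d_le: "d \<le> nm (x - w)" if "w \<in> W" for w
    unfolding d_def by (rule cInf_lower[OF _ Nbd]) (use that in \<open>simp add: N_def\<close>)
  have d0: "d \<ge> 0"
    unfolding d_def by (rule cInf_greatest[OF Nne]) (use x WH in \<open>auto simp: N_def\<close>)
  have "\<exists>w\<in>W. (nm (x - w))\<^sup>2 \<le> d\<^sup>2 + eps n" for n
  proof -
    have "eps n > 0" unfolding eps_def by simp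
    then have "d < sqrt (d\<^sup>2 + eps n)"
      using real_sqrt_less_mono[of "d\<^sup>2" "d\<^sup>2 + eps n"] d0 by simp
    then obtain w where w: "w \<in> W" "nm (x - w) < sqrt (d\<^sup>2 + eps n)"
      using cInf_less_iff[OF Nne Nbd] unfolding d_def N_def by blast
    moreover have "0 \<le> nm (x - w)" using x w WH by auto
    ultimately have "(nm (x - w))\<^sup>2 < (sqrt (d\<^sup>2 + eps n))\<^sup>2" by (intro power_strict_mono) auto
    also have "\<dots> = d\<^sup>2 + eps n" using \<open>eps n > 0\<close> by simp
    finally show ?thesis using w by (blast intro: less_imp_le)
  qed
  then obtain ws where ws: "\<And>n. ws n \<in> W" "\<And>n. (nm (x - ws n))\<^sup>2 \<le> d\<^sup>2 + eps n" by metis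
  have eps: "eps \<longlonglongrightarrow> 0" unfolding eps_def by (rule LIMSEQ_inverse_real_of_nat)
  have wsH: "ws n \<in> H" for n using ws WH by blast
  obtain p where p: "p \<in> H" "conv ip ws p"
    using complete[OF wsH minimizing_sequence_cauchy[OF Ws WH x d0 d_le ws eps]] by blast
  have "nm ((x - ws n) - (x - p)) = nm (ws n - p)" for n
    using nrm_commute[of p "ws n"] p wsH by (simp add: algebra_simps)
  then have "conv ip (\<lambda>n. x - ws n) (x - p)" using p(2) unfolding conv_def by simp
  from conv_nrm[OF _ _ this] have "(\<lambda>n. nm (x - ws n)) \<longlonglongrightarrow> nm (x - p)" using x p(1) wsH by simp
  then have "(\<lambda>n. (nm (x - ws n))\<^sup>2) \<longlonglongrightarrow> (nm (x - p))\<^sup>2" by (rule tendsto_power)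
  moreover have "(\<lambda>n. d\<^sup>2 + eps n) \<longlonglongrightarrow> d\<^sup>2 + 0" by (rule tendsto_add[OF tendsto_const eps])
  ultimately have "(nm (x - p))\<^sup>2 \<le> d\<^sup>2 + 0" by (rule LIMSEQ_le) (use ws(2) in blast)
  then have "nm (x - p) \<le> d" using d0 by (simp add: power2_le_iff_abs_le)
  moreover have "p \<in> W" using Wc[of ws p] ws p by blast
  ultimately show ?thesis using d_le by (blast intro: order_trans)
qed

lemma closed_subspace_eq_if_orth_zero:
  assumes W: "closed_subspace W" and perp: "\<And>v. v \<in> H \<Longrightarrow> \<forall>w\<in>W. ip w v = 0 \<Longrightarrow> v = 0"
  shows "W = H"
proof
  have WH: "W \<subseteq> H" and Ws: "subspaceC W" using W unfolding closed_subspace_def by blast+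
  show "W \<subseteq> H" by (rule WH)
  show "H \<subseteq> W"
  proof
    fix x assume x: "x \<in> H"
    obtain p where p: "p \<in> W" "\<And>w. w \<in> W \<Longrightarrow> nm (x - p) \<le> nm (x - w)"
      using closest_point_exists[OF W x] by blast
    have "x - p \<in> H" using x p(1) WH by auto
    then have "x - p = 0" using perp closest_point_orthogonal[OF Ws WH x p] by blast
    then show "x \<in> W" using p(1) by simp
  qed
qed

lemma riesz_representation:
  assumes add: "\<And>x y. x \<in> H \<Longrightarrow> y \<in> H \<Longrightarrow> phi (x + y) = phi x + phi y"
    and scl: "\<And>c x. x \<in> H \<Longrightarrow> phi (c *\<^sub>C x) = c * phi x"
    and bd: "\<And>x. x \<in> H \<Longrightarrow> cmod (phi x) \<le> C * nm x"
  shows "\<exists>z\<in>H. \<forall>x\<in>H. phi x = ip x z"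
proof -
  define N where "N = {x\<in>H. phi x = 0}"
  have phi0: "phi 0 = 0" using scl[of 0 0] by simp
  have "closed_subspace N"
  proof (rule closed_subspaceI)
    show "N \<subseteq> H" unfolding N_def by blast
    show "subspaceC N" unfolding N_def subspaceC_def using add scl phi0 by auto
    fix xs x assume xs: "\<And>n. xs n \<in> N" and x: "x \<in> H" and cx: "conv ip xs x"
    have "cmod (phi x) \<le> C * nm (xs n - x)" for n
      using bd[of "xs n - x"] add[of "xs n" "- x"] scl[of x "-1"] xs[of n] x
      by (simp add: N_def scaleC_minus1)
    then have "cmod (phi x) \<le> C * 0"
      using cx unfolding conv_def by (intro LIMSEQ_le_const[OF tendsto_mult[OF tendsto_const]]) auto
    then show "x \<in> N" unfolding N_def using x by simp
  qed
  show ?thesis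
  proof (cases "N = H")
    case True
    then show ?thesis by (intro bexI[of _ 0]) (auto simp: N_def)
  next
    case False
    then obtain v where v: "v \<in> H" "\<forall>w\<in>N. ip w v = 0" "v \<noteq> 0"
      using closed_subspace_eq_if_orth_zero[OF \<open>closed_subspace N\<close>] by blast
    have pv: "phi v \<noteq> 0" using v ip_self_zero unfolding N_def by blast
    have vv: "ip v v \<noteq> 0" using v ip_self_zero by blast
    show ?thesis
    proof (intro bexI[of _ "(cnj (phi v) / cnj (ip v v)) *\<^sub>C v"] ballI)
      fix x assume x: "x \<in> H"
      have "phi (x - (phi x / phi v) *\<^sub>C v) = 0"
        using add[of x "(- (phi x / phi v)) *\<^sub>C v"] scl[of v "- (phi x / phi v)"] x v pv
        by (simp add: scaleC_minus_left)
      then have "ip (x - (phi x / phi v) *\<^sub>C v) v = 0" using v x unfolding N_def by simp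
      then have "ip x v = (phi x / phi v) * ip v v" using x v by (simp add: ip_diffL ip_scaleL)
      then show "phi x = ip x ((cnj (phi v) / cnj (ip v v)) *\<^sub>C v)"
        using x v pv vv by (simp add: ip_scaleR field_simps)
    qed (use v in simp)
  qed
qed

lemma bounded_operator_adjoint:
  assumes K: "linear_on H K" "\<And>h. h \<in> H \<Longrightarrow> K h \<in> H" "\<And>h. h \<in> H \<Longrightarrow> nm (K h) \<le> C * nm h"
    and k: "k \<in> H"
  shows "\<exists>z\<in>H. \<forall>h\<in>H. ip (K h) k = ip h z"
proof (rule riesz_representation)
  show "ip (K (x + y)) k = ip (K x) k + ip (K y) k" if "x \<in> H" "y \<in> H" for x y
    using linear_on_add[OF K(1) that] ip_addL K(2) that k by simp
  show "ip (K (c *\<^sub>C x)) k = c * ip (K x) k" if "x \<in> H" for c x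
    using linear_on_scale[OF K(1) that] ip_scaleL K(2) that k by simp
  show "cmod (ip (K x) k) \<le> (nm k * C) * nm x" if x: "x \<in> H" for x
  proof -
    have "cmod (ip (K x) k) \<le> nm (K x) * nm k" using cauchy_schwarz K(2) x k by blast
    also have "\<dots> \<le> C * nm x * nm k" using K(3)[OF x] k by (simp add: mult_right_mono)
    finally show ?thesis by (simp add: mult_ac)
  qed
qed

end

lemma contraction_on_linear: "contraction_on H ip K \<Longrightarrow> linear_on H K"
  unfolding contraction_on_def by blast

lemma contraction_on_in: "contraction_on H ip K \<Longrightarrow> h \<in> H \<Longrightarrow> K h \<in> H"
  unfolding contraction_on_def by blast

lemma contraction_on_le: "contraction_on H ip K \<Longrightarrow> h \<in> H \<Longrightarrow> nrm ip (K h) \<le> nrm ip h"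
  unfolding contraction_on_def by blast

lemma (in inner_product_space) dominated_relation_single_valued:
  assumes D: "subspaceC D" and u: "linear_on D u"
    and w: "linear_on D w" "\<And>f. f \<in> D \<Longrightarrow> w f \<in> H"
    and le: "\<And>f. f \<in> D \<Longrightarrow> nm (w f) \<le> nm (u f)"
    and f: "f \<in> D" and g: "g \<in> D" and eq: "u f = u g"
  shows "w f = w g"
proof -
  have "nm (w f - w g) \<le> nm (u f - u g)"
    using le[OF subspaceC_diff[OF D f g]] linear_on_diff[OF u f g] linear_on_diff[OF w(1) f g] by simp
  then show ?thesis using nrm_le0_imp_zero[of "w f - w g"] w(2) f g eq by simp
qed

lemma (in inner_product_space) contraction_of_dominated_graph:
  assumes D: "subspaceC D" and u: "linear_on D u" and onto: "u ` D = H"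
    and w: "linear_on D w" "\<And>f. f \<in> D \<Longrightarrow> w f \<in> H"
    and le: "\<And>f. f \<in> D \<Longrightarrow> nm (w f) \<le> nm (u f)"
  shows "\<exists>K. contraction_on H ip K \<and> (\<forall>f\<in>D. K (u f) = w f)"
proof -
  note det = dominated_relation_single_valued[OF D u w le]
  define K where "K h = w (SOME f. f \<in> D \<and> u f = h)" for h
  have Ku: "K (u f) = w f" if f: "f \<in> D" for f
  proof -
    let ?g = "SOME g. g \<in> D \<and> u g = u f"
    have "?g \<in> D \<and> u ?g = u f" by (rule someI[where x = f]) (simp add: f)
    then show ?thesis unfolding K_def using det f by blast
  qed
  have preimage: "\<exists>f\<in>D. u f = h" if "h \<in> H" for h
  proof -
    have "h \<in> u ` D" using that onto by simp
    then show ?thesis by blast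
  qed
  have "contraction_on H ip K"
    unfolding contraction_on_def
  proof (intro conjI ballI subsetI)
    show "linear_on H K"
    proof (rule linear_onI[OF subspace])
      fix x y assume "x \<in> H" "y \<in> H"
      then obtain f g where fg: "f \<in> D" "g \<in> D" "u f = x" "u g = y" using preimage by blast
      have "x + y = u (f + g)" using fg linear_on_add[OF u] by simp
      then show "K (x + y) = K x + K y"
        using Ku subspaceC_add[OF D fg(1) fg(2)] Ku[OF fg(1), unfolded fg(3)] Ku[OF fg(2), unfolded fg(4)]
          linear_on_add[OF w(1) fg(1) fg(2)] by simp
    next
      fix c x assume "x \<in> H"
      then obtain f where f: "f \<in> D" "u f = x" using preimage by blast
      have "c *\<^sub>C x = u (c *\<^sub>C f)" using f linear_on_scale[OF u] by simp
      then show "K (c *\<^sub>C x) = c *\<^sub>C K x"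
        using Ku subspaceC_scale[OF D f(1)] Ku[OF f(1), unfolded f(2)] linear_on_scale[OF w(1) f(1)] by simp
    qed
  next
    fix y assume "y \<in> K ` H"
    then obtain f where "f \<in> D" "y = K (u f)" using preimage by blast
    then show "y \<in> H" using Ku w(2) by auto
  next
    fix x assume "x \<in> H"
    then obtain f where "f \<in> D" "u f = x" using preimage by blast
    then show "nm (K x) \<le> nm x" using Ku le by auto
  qed
  then show ?thesis using Ku by blast
qed

lemma (in hilbert_space) contraction_adjoint:
  "contraction_on H ip K \<Longrightarrow> k \<in> H \<Longrightarrow> \<exists>z\<in>H. \<forall>h\<in>H. ip (K h) k = ip h z"
  by (rule bounded_operator_adjoint[of K 1])
    (auto dest: contraction_on_linear contraction_on_in contraction_on_le)

section \<open>Dissipative operators\<close>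

text \<open>Sign convention of \<open>m_dissipative\<close>: the upper half-plane lies in the resolvent set.\<close>
definition dissipative_op :: "('a::cvec \<Rightarrow> 'a \<Rightarrow> complex) \<Rightarrow> 'a set \<Rightarrow> ('a \<Rightarrow> 'a) \<Rightarrow> bool" where
  "dissipative_op ip D T \<longleftrightarrow> (\<forall>f\<in>D. Im (ip (T f) f) \<le> 0)"

locale hilbert_UNIV = hilbert_space "UNIV :: 'a::cvec set" ip for ip :: "'a::cvec \<Rightarrow> 'a \<Rightarrow> complex"
begin

lemma dissipative_lower_bound:
  assumes dis: "Im (ip v f) \<le> 0" and l: "Im l > 0"
  shows "Im l * nm f \<le> nm (v - l *\<^sub>C f)"
proof -
  have "Im (ip (v - l *\<^sub>C f) f) = Im (ip v f) - Im l * (nm f)\<^sup>2"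
    using ip_self[of f] by (simp add: ip_diffL ip_scaleL)
  then have "Im l * (nm f)\<^sup>2 \<le> - Im (ip (v - l *\<^sub>C f) f)" using dis by simp
  also have "\<dots> \<le> cmod (ip (v - l *\<^sub>C f) f)" by (metis abs_Im_le_cmod abs_le_D2)
  also have "\<dots> \<le> nm (v - l *\<^sub>C f) * nm f" by (rule cauchy_schwarz) auto
  finally have "(Im l * nm f) * nm f \<le> nm (v - l *\<^sub>C f) * nm f"
    by (simp add: power2_eq_square mult.assoc)
  then show ?thesis using nrm_ge0[of f] by (cases "nm f = 0") (auto simp: less_le)
qed

lemma m_dissipativeI:
  assumes op: "operator D T" and dis: "dissipative_op ip D T"
    and onto: "\<And>l. Im l > 0 \<Longrightarrow> (\<lambda>x. T x - l *\<^sub>C x) ` D = UNIV"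
  shows "m_dissipative ip D T"
  unfolding m_dissipative_def
proof (intro conjI allI impI)
  fix l :: complex assume l: "Im l > 0"
  have lin: "linear_on D T" using op unfolding operator_def .
  have bound: "nm x \<le> nm (T x - l *\<^sub>C x) / Im l" if "x \<in> D" for x
    using dissipative_lower_bound[of "T x" x l] dis that l
    by (simp add: dissipative_op_def field_simps)
  have "inj_on (\<lambda>x. T x - l *\<^sub>C x) D"
  proof (rule inj_onI)
    fix x y assume x: "x \<in> D" and y: "y \<in> D" and eq: "T x - l *\<^sub>C x = T y - l *\<^sub>C y"
    have "T (x - y) - l *\<^sub>C (x - y) = (T x - l *\<^sub>C x) - (T y - l *\<^sub>C y)"
      using linear_on_diff[OF lin x y] by (simp add: scaleC_diff_right algebra_simps)
    then have "T (x - y) - l *\<^sub>C (x - y) = 0" using eq by simp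
    then have "nm (x - y) \<le> 0"
      using bound subspaceC_diff[OF linear_on_subspaceC[OF lin] x y] by fastforce
    then show "x = y" using nrm_le0_imp_zero[of "x - y"] by simp
  qed
  moreover have "\<forall>x\<in>D. nm x \<le> (1 / Im l) * nm (T x - l *\<^sub>C x)" using bound by simp
  ultimately show "in_resolvent ip D T l"
    unfolding in_resolvent_def bij_betw_def using onto[OF l] by blast
  show "\<forall>x\<in>D. nm x \<le> nm (T x - l *\<^sub>C x) / Im l" using bound by blast
qed (use op in simp)

text \<open>If \<open>Im (T f|f) > 0\<close>, the resolvent estimate fails at \<open>\<lambda> = i t\<close> for large \<open>t\<close>.\<close>
lemma m_dissipative_imp_dissipative:
  assumes m: "m_dissipative ip D T"
  shows "dissipative_op ip D T"
  unfolding dissipative_op_def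
proof (rule ballI, rule ccontr)
  fix f assume f: "f \<in> D" and "\<not> Im (ip (T f) f) \<le> 0"
  then have z0: "Im (ip (T f) f) > 0" by simp
  define t where "t = ((nm (T f))\<^sup>2 + 1) / Im (ip (T f) f)"
  define c where "c = \<i> * complex_of_real t"
  have t0: "t > 0" unfolding t_def using z0 by (simp add: add_nonneg_pos)
  have c: "Im c = t" unfolding c_def by simp
  then have "Im c > 0" using t0 by simp
  then have "\<forall>x\<in>D. nm x \<le> nm (T x - c *\<^sub>C x) / Im c"
    using m unfolding m_dissipative_def by blast
  then have "nm f \<le> nm (T f - c *\<^sub>C f) / t" using f c by simp
  then have "(t * nm f)\<^sup>2 \<le> (nm (T f - c *\<^sub>C f))\<^sup>2"
    using t0 by (intro power_mono) (simp_all add: field_simps)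
  also have "\<dots> = (nm (T f))\<^sup>2 + (nm (c *\<^sub>C f))\<^sup>2 - 2 * Re (ip (T f) (c *\<^sub>C f))"
    by (rule nrm_diff_sq) auto
  also have "nm (c *\<^sub>C f) = t * nm f" unfolding c_def using t0 by (simp add: nrm_scale norm_mult)
  also have "Re (ip (T f) (c *\<^sub>C f)) = t * Im (ip (T f) f)" unfolding c_def by (simp add: ip_scaleR)
  finally have "2 * (t * Im (ip (T f) f)) \<le> (nm (T f))\<^sup>2" by simp
  moreover have "t * Im (ip (T f) f) = (nm (T f))\<^sup>2 + 1" unfolding t_def using z0 by simp
  ultimately have "(nm (T f))\<^sup>2 + 2 \<le> 0" by simp
  moreover have "0 \<le> (nm (T f))\<^sup>2" by simp
  ultimately show False by linarith
qed

lemma m_dissipative_onto: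
  assumes "m_dissipative ip D T" "Im l > 0"
  shows "\<exists>x\<in>D. T x - l *\<^sub>C x = y"
proof -
  have "(\<lambda>x. T x - l *\<^sub>C x) ` D = UNIV"
    using assms unfolding m_dissipative_def in_resolvent_def bij_betw_def by blast
  then have "y \<in> (\<lambda>x. T x - l *\<^sub>C x) ` D" by simp
  then show ?thesis by blast
qed

lemma m_dissipative_subspace: "m_dissipative ip D T \<Longrightarrow> subspaceC D"
  unfolding m_dissipative_def operator_def by (blast intro: linear_on_subspaceC)

lemma m_dissipative_cong:
  assumes "m_dissipative ip D T" "operator D T'" "\<And>x. x \<in> D \<Longrightarrow> T' x = T x"
  shows "m_dissipative ip D T'"
proof -
  have "bij_betw (\<lambda>x. T' x - l *\<^sub>C x) D UNIV = bij_betw (\<lambda>x. T x - l *\<^sub>C x) D UNIV" for l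
    by (rule bij_betw_cong) (simp add: assms(3))
  then show ?thesis using assms unfolding m_dissipative_def in_resolvent_def by simp
qed

text \<open>\<open>T - i\<close> is onto, so \<open>x \<in> D'\<close> differs from some \<open>d \<in> D\<close> by an eigenvector of \<open>T'\<close> for \<open>i\<close>,
  which dissipativity forces to vanish.\<close>
lemma m_dissipative_maximal:
  assumes m: "m_dissipative ip D T" and lin: "linear_on D' T'" and DD': "D \<subseteq> D'"
    and ext: "\<And>f. f \<in> D \<Longrightarrow> T' f = T f" and dis: "dissipative_op ip D' T'"
  shows "D' = D"
proof
  show "D' \<subseteq> D"
  proof
    fix x assume x: "x \<in> D'"
    obtain d where d: "d \<in> D" "T d - \<i> *\<^sub>C d = T' x - \<i> *\<^sub>C x"
      using m_dissipative_onto[OF m, of \<i> "T' x - \<i> *\<^sub>C x"] by auto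
    have dD': "d \<in> D'" using d(1) DD' by blast
    have y: "x - d \<in> D'" using x dD' linear_on_subspaceC[OF lin] subspaceC_diff by blast
    have "T' (x - d) = T' x - T d" using linear_on_diff[OF lin x dD'] ext[OF d(1)] by simp
    also have "T d = (T' x - \<i> *\<^sub>C x) + \<i> *\<^sub>C d" by (subst d(2)[symmetric]) simp
    finally have "T' (x - d) = \<i> *\<^sub>C (x - d)" by (simp add: scaleC_diff_right)
    then have "Im (ip (T' (x - d)) (x - d)) = (nm (x - d))\<^sup>2"
      using ip_self[of "x - d"] by (simp add: ip_scaleL)
    then have "nm (x - d) \<le> 0" using dis y unfolding dissipative_op_def by force
    then show "x \<in> D" using nrm_le0_imp_zero[of "x - d"] d(1) by simp
  qed
qed (rule DD')

end

section \<open>Boundary pairs in Cayley form\<close>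

text \<open>A boundary triple for \<open>TS = T0*\<close> in Cayley form: \<open>u\<close>, \<open>w\<close> play the role of \<open>a + i b\<close>,
  \<open>a - i b\<close> of the header; \<open>m_boundary_setting\<close> below is an instance.\<close>
locale cayley_boundary_pair =
  X: hilbert_UNIV ipx + B: hilbert_space H ipH
  for ipx :: "'x::cvec \<Rightarrow> 'x \<Rightarrow> complex" and H :: "'h::cvec set" and ipH +
  fixes D0 :: "'x set" and T0 :: "'x \<Rightarrow> 'x" and DS :: "'x set" and TS :: "'x \<Rightarrow> 'x"
    and u w :: "'x \<Rightarrow> 'h"
  assumes min_dense: "dense_in ipx D0 UNIV"
    and min_subset_max: "D0 \<subseteq> DS"
    and max_extends_min: "\<And>f. f \<in> D0 \<Longrightarrow> TS f = T0 f"
    and max_dom_adjoint: "\<And>g. g \<in> DS \<longleftrightarrow> (\<exists>h. \<forall>f\<in>D0. ipx (T0 f) g = ipx f h)"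
    and max_adjoint: "\<And>f g. g \<in> DS \<Longrightarrow> f \<in> D0 \<Longrightarrow> ipx (T0 f) g = ipx f (TS g)"
    and max_linear: "linear_on DS TS"
    and u_linear: "linear_on DS u" and w_linear: "linear_on DS w"
    and u_in: "\<And>f. f \<in> DS \<Longrightarrow> u f \<in> H" and w_in: "\<And>f. f \<in> DS \<Longrightarrow> w f \<in> H"
    and green: "\<And>f g. f \<in> DS \<Longrightarrow> g \<in> DS \<Longrightarrow>
        ipx (TS f) g - ipx f (TS g) = (- \<i> / 2) * (ipH (u f) (u g) - ipH (w f) (w g))"
    and uw_onto: "\<And>x y. x \<in> H \<Longrightarrow> y \<in> H \<Longrightarrow> \<exists>f\<in>DS. u f = x \<and> w f = y"
begin

abbreviation "nX \<equiv> nrm ipx"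
abbreviation "nH \<equiv> nrm ipH"

lemma max_subspace: "subspaceC DS"
  using max_linear by (rule linear_on_subspaceC)

lemma max_adjointI:
  assumes "\<And>f. f \<in> D0 \<Longrightarrow> ipx (T0 f) g = ipx f h"
  shows "g \<in> DS" and "TS g = h"
proof -
  show g: "g \<in> DS" using assms max_dom_adjoint by blast
  show "TS g = h" by (rule X.dense_ext[OF min_dense]) (use max_adjoint[OF g] assms in auto)
qed

lemma symmetric_iff_uw:
  "f \<in> DS \<Longrightarrow> g \<in> DS \<Longrightarrow> ipx (TS f) g = ipx f (TS g) \<longleftrightarrow> ipH (u f) (u g) = ipH (w f) (w g)"
  using green[of f g] by auto

lemma Im_max_eq:
  assumes f: "f \<in> DS"
  shows "Im (ipx (TS f) f) = ((nH (w f))\<^sup>2 - (nH (u f))\<^sup>2) / 4"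
proof -
  have "ipx (TS f) f - cnj (ipx (TS f) f) =
      (- \<i> / 2) * (complex_of_real ((nH (u f))\<^sup>2) - complex_of_real ((nH (w f))\<^sup>2))"
    using green[OF f f] X.ip_sym[of "TS f" f] B.ip_self[OF u_in[OF f]] B.ip_self[OF w_in[OF f]] by simp
  then have "Im (ipx (TS f) f - cnj (ipx (TS f) f)) =
      Im ((- \<i> / 2) * (complex_of_real ((nH (u f))\<^sup>2) - complex_of_real ((nH (w f))\<^sup>2)))"
    by simp
  then show ?thesis by (simp add: field_simps)
qed

lemma dissipative_iff_norm_w_le_u:
  assumes f: "f \<in> DS"
  shows "Im (ipx (TS f) f) \<le> 0 \<longleftrightarrow> nH (w f) \<le> nH (u f)"
proof -
  have "Im (ipx (TS f) f) \<le> 0 \<longleftrightarrow> (nH (w f))\<^sup>2 \<le> (nH (u f))\<^sup>2"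
    unfolding Im_max_eq[OF f] by (simp add: divide_le_0_iff)
  also have "\<dots> \<longleftrightarrow> nH (w f) \<le> nH (u f)"
    using B.nrm_ge0[OF w_in[OF f]] B.nrm_ge0[OF u_in[OF f]] by (simp add: power2_le_iff_abs_le)
  finally show ?thesis .
qed

lemma min_dom_uw_zero:
  assumes f0: "f \<in> D0"
  shows "u f = 0" and "w f = 0"
proof -
  have f: "f \<in> DS" using f0 min_subset_max by blast
  have sym: "ipH (u f) (u g) = ipH (w f) (w g)" if g: "g \<in> DS" for g
    using symmetric_iff_uw[OF f g] max_adjoint[OF g f0] max_extends_min[OF f0] by simp
  obtain g1 where g1: "g1 \<in> DS" "u g1 = u f" "w g1 = 0" using uw_onto[OF u_in[OF f] B.zero_in] by blast
  obtain g2 where g2: "g2 \<in> DS" "u g2 = 0" "w g2 = w f" using uw_onto[OF B.zero_in w_in[OF f]] by blast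
  show "u f = 0" using sym[OF g1(1)] g1 w_in[OF f] u_in[OF f] B.ip_self_zero by simp
  show "w f = 0" using sym[OF g2(1)] g2 w_in[OF f] u_in[OF f] B.ip_self_zero by simp
qed

lemma max_closed:
  assumes xs: "\<And>n. xs n \<in> DS" and cx: "conv ipx xs x" and cy: "conv ipx (\<lambda>n. TS (xs n)) y"
  shows "x \<in> DS" and "TS x = y"
proof -
  have "ipx (T0 f) x = ipx f y" if "f \<in> D0" for f
  proof -
    have "(\<lambda>n. ipx (T0 f) (xs n)) \<longlonglongrightarrow> ipx (T0 f) x" by (rule X.conv_ipR) (use cx in auto)
    moreover have "(\<lambda>n. ipx f (TS (xs n))) \<longlonglongrightarrow> ipx f y" by (rule X.conv_ipR) (use cy in auto)
    ultimately show ?thesis using max_adjoint[OF xs that] LIMSEQ_unique by simp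
  qed
  note adj = this
  show "x \<in> DS" by (rule max_adjointI(1)[OF adj])
  show "TS x = y" by (rule max_adjointI(2)[OF adj])
qed

text \<open>Green's identity against elements \<open>g\<close> with \<open>(u g, w g) = (h, 0)\<close> or \<open>(0, h)\<close> expresses
  \<open>(u f|h)\<close> and \<open>(w f|h)\<close> through \<open>TS f\<close> and \<open>f\<close>.\<close>
lemma uw_weakly_continuous:
  assumes xs: "\<And>n. xs n \<in> DS" and x: "x \<in> DS" and cx: "conv ipx xs x"
    and cy: "conv ipx (\<lambda>n. TS (xs n)) (TS x)" and h: "h \<in> H"
  shows "(\<lambda>n. ipH (u (xs n)) h) \<longlonglongrightarrow> ipH (u x) h" and "(\<lambda>n. ipH (w (xs n)) h) \<longlonglongrightarrow> ipH (w x) h"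
proof -
  have lim: "(\<lambda>n. c * (ipx (TS (xs n)) g - ipx (xs n) (TS g))) \<longlonglongrightarrow> c * (ipx (TS x) g - ipx x (TS g))"
    for c g by (intro tendsto_mult tendsto_const tendsto_diff X.conv_ipL) (use cx cy in auto)
  have solve: "c = (- \<i> / 2) * z \<Longrightarrow> 2 * \<i> * c = z" "c = (\<i> / 2) * z \<Longrightarrow> - 2 * \<i> * c = z"
    for c z :: complex by (simp_all add: field_simps)
  obtain g1 where g1: "g1 \<in> DS" "u g1 = h" "w g1 = 0" using uw_onto[OF h B.zero_in] by blast
  have "2 * \<i> * (ipx (TS z) g1 - ipx z (TS g1)) = ipH (u z) h" if "z \<in> DS" for z
    using green[OF that g1(1)] g1 w_in[OF that] by (intro solve(1)) simp
  then show "(\<lambda>n. ipH (u (xs n)) h) \<longlonglongrightarrow> ipH (u x) h"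
    using lim[of "2 * \<i>" g1] xs x by simp
  obtain g2 where g2: "g2 \<in> DS" "u g2 = 0" "w g2 = h" using uw_onto[OF B.zero_in h] by blast
  have "- 2 * \<i> * (ipx (TS z) g2 - ipx z (TS g2)) = ipH (w z) h" if "z \<in> DS" for z
    using green[OF that g2(1)] g2 u_in[OF that] by (intro solve(2)) simp
  then show "(\<lambda>n. ipH (w (xs n)) h) \<longlonglongrightarrow> ipH (w x) h"
    using lim[of "- 2 * \<i>" g2] xs x by simp
qed

subsection \<open>The extension defined by a contraction\<close>

definition contraction_dom :: "('h \<Rightarrow> 'h) \<Rightarrow> 'x set" where
  "contraction_dom K = {\<psi>\<in>DS. K (u \<psi>) + w \<psi> = 0}"

lemma contraction_dom_iff: "f \<in> contraction_dom K \<longleftrightarrow> f \<in> DS \<and> w f = - K (u f)"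
  unfolding contraction_dom_def by (auto simp: eq_neg_iff_add_eq_0 add.commute)

lemma contraction_dom_subset: "contraction_dom K \<subseteq> DS"
  unfolding contraction_dom_def by blast

lemma contraction_dom_u_onto:
  assumes K: "contraction_on H ipH K" and h: "h \<in> H"
  shows "\<exists>f\<in>contraction_dom K. u f = h"
proof -
  obtain f where f: "f \<in> DS" "u f = h" "w f = - K h"
    using uw_onto[OF h B.minus_in[OF contraction_on_in[OF K h]]] by blast
  then have "f \<in> contraction_dom K" unfolding contraction_dom_iff by simp
  then show ?thesis using f(2) by blast
qed

lemma subspaceC_contraction_dom:
  assumes K: "linear_on H K"
  shows "subspaceC (contraction_dom K)"
  unfolding subspaceC_def contraction_dom_def
proof (intro conjI allI ballI)
  show "0 \<in> {\<psi> \<in> DS. K (u \<psi>) + w \<psi> = 0}"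
    using max_subspace subspaceC_zero linear_on_zero[OF u_linear] linear_on_zero[OF w_linear]
      linear_on_zero[OF K] by simp
next
  fix x y assume "x \<in> {\<psi> \<in> DS. K (u \<psi>) + w \<psi> = 0}" "y \<in> {\<psi> \<in> DS. K (u \<psi>) + w \<psi> = 0}"
  then have x: "x \<in> DS" "K (u x) + w x = 0" and y: "y \<in> DS" "K (u y) + w y = 0" by auto
  have "K (u (x + y)) + w (x + y) = (K (u x) + w x) + (K (u y) + w y)"
    using linear_on_add[OF u_linear x(1) y(1)] linear_on_add[OF w_linear x(1) y(1)]
      linear_on_add[OF K u_in[OF x(1)] u_in[OF y(1)]] by (simp add: algebra_simps)
  then show "x + y \<in> {\<psi> \<in> DS. K (u \<psi>) + w \<psi> = 0}"
    using x y subspaceC_add[OF max_subspace x(1) y(1)] by simp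
next
  fix c x assume "x \<in> {\<psi> \<in> DS. K (u \<psi>) + w \<psi> = 0}"
  then have x: "x \<in> DS" "K (u x) + w x = 0" by auto
  have "K (u (c *\<^sub>C x)) + w (c *\<^sub>C x) = c *\<^sub>C (K (u x) + w x)"
    using linear_on_scale[OF u_linear x(1)] linear_on_scale[OF w_linear x(1)]
      linear_on_scale[OF K u_in[OF x(1)]] by (simp add: scaleC_add_right)
  then show "c *\<^sub>C x \<in> {\<psi> \<in> DS. K (u \<psi>) + w \<psi> = 0}"
    using x subspaceC_scale[OF max_subspace x(1)] by simp
qed

lemma min_subset_contraction_dom: "linear_on H K \<Longrightarrow> D0 \<subseteq> contraction_dom K"
  using min_dom_uw_zero min_subset_max linear_on_zero unfolding contraction_dom_def by fastforce

lemma contraction_dom_operator: "linear_on H K \<Longrightarrow> operator (contraction_dom K) TS"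
  unfolding operator_def
  by (rule linear_on_subset[OF max_linear subspaceC_contraction_dom contraction_dom_subset])

lemma contraction_dom_dissipative:
  assumes K: "contraction_on H ipH K"
  shows "dissipative_op ipx (contraction_dom K) TS"
  unfolding dissipative_op_def
proof
  fix f assume "f \<in> contraction_dom K"
  then have f: "f \<in> DS" and wf: "w f = - K (u f)" unfolding contraction_dom_iff by auto
  have "nH (w f) = nH (K (u f))" using wf B.nrm_minus contraction_on_in[OF K u_in[OF f]] by simp
  also have "\<dots> \<le> nH (u f)" using contraction_on_le[OF K u_in[OF f]] .
  finally show "Im (ipx (TS f) f) \<le> 0" using dissipative_iff_norm_w_le_u[OF f] by simp
qed

text \<open>\<open>contraction_dom K\<close> is closed in the graph norm of \<open>TS\<close>: the condition \<open>K (u f) + w f = 0\<close>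
  is tested weakly, against \<open>h\<close> through the adjoint of \<open>K\<close>.\<close>
lemma contraction_dom_graph_closed:
  assumes K: "contraction_on H ipH K" and fs: "\<And>n. fs n \<in> contraction_dom K"
    and f: "f \<in> DS" and cf: "conv ipx fs f" and cT: "conv ipx (\<lambda>n. TS (fs n)) (TS f)"
  shows "f \<in> contraction_dom K"
proof -
  have fsD: "fs n \<in> DS" for n using fs contraction_dom_subset by blast
  have "K (u f) + w f = 0"
  proof (rule B.ip_eq_zero_all')
    show "K (u f) + w f \<in> H" using contraction_on_in[OF K u_in[OF f]] w_in[OF f] by simp
    fix h assume h: "h \<in> H"
    obtain z where z: "z \<in> H" "\<And>h'. h' \<in> H \<Longrightarrow> ipH (K h') h = ipH h' z"
      using B.contraction_adjoint[OF K h] by blast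
    have split: "ipH (K (u g) + w g) h = ipH (u g) z + ipH (w g) h" if "g \<in> DS" for g
      using B.ip_addL contraction_on_in[OF K u_in[OF that]] w_in[OF that] h z(2)[OF u_in[OF that]]
      by simp
    have "(\<lambda>n. ipH (u (fs n)) z + ipH (w (fs n)) h) \<longlonglongrightarrow> ipH (u f) z + ipH (w f) h"
      using uw_weakly_continuous[OF fsD f cf cT] z(1) h by (intro tendsto_add) auto
    moreover have "ipH (u (fs n)) z + ipH (w (fs n)) h = 0" for n
    proof -
      have "ipH (u (fs n)) z + ipH (w (fs n)) h = ipH (K (u (fs n)) + w (fs n)) h"
        using split[OF fsD[of n]] by simp
      also have "\<dots> = 0" using fs[of n] h unfolding contraction_dom_def by simp
      finally show ?thesis .
    qed
    ultimately have "(\<lambda>n. 0::complex) \<longlonglongrightarrow> ipH (u f) z + ipH (w f) h" by simp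
    then show "ipH (K (u f) + w f) h = 0" using split[OF f] by (simp add: LIMSEQ_const_iff)
  qed
  then show ?thesis using f unfolding contraction_dom_def by simp
qed

lemma contraction_dom_range_closed:
  assumes K: "contraction_on H ipH K" and l: "Im l > 0"
  shows "X.closed_subspace ((\<lambda>x. TS x - l *\<^sub>C x) ` contraction_dom K)"
proof (rule X.closed_subspaceI)
  let ?F = "\<lambda>x. TS x - l *\<^sub>C x" and ?D = "contraction_dom K"
  have D: "subspaceC ?D" using subspaceC_contraction_dom[OF contraction_on_linear[OF K]] .
  have T: "linear_on ?D TS" using contraction_dom_operator[OF contraction_on_linear[OF K]]
    unfolding operator_def .
  have F: "linear_on ?D ?F"
    by (rule linear_onI[OF D])
      (simp_all add: linear_on_add[OF T] linear_on_scale[OF T] scaleC_add_right scaleC_diff_right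
        scaleC_scaleC mult.commute algebra_simps)
  show "?F ` ?D \<subseteq> UNIV" by simp
  show "subspaceC (?F ` ?D)" by (rule subspaceC_image[OF F])
  fix ys y assume ys: "\<And>n. ys n \<in> ?F ` ?D" and cy: "conv ipx ys y"
  obtain fs where fs: "\<And>n. fs n \<in> ?D" "\<And>n. ?F (fs n) = ys n" by (rule obtain_preimage_seq[where ys = ys, OF ys]) blast
  have fsD: "fs n \<in> DS" for n using fs contraction_dom_subset by blast
  have "cauchy ipx fs"
  proof (rule cauchy_by_bound[OF X.conv_cauchy[OF _ _ cy]])
    show "1 / Im l \<ge> 0" using l by simp
    fix m n
    have "fs m - fs n \<in> ?D" using subspaceC_diff[OF D fs(1) fs(1)] .
    then have "Im (ipx (TS (fs m - fs n)) (fs m - fs n)) \<le> 0"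
      using contraction_dom_dissipative[OF K] unfolding dissipative_op_def by blast
    then have "Im l * nX (fs m - fs n) \<le> nX (?F (fs m - fs n))"
      by (rule X.dissipative_lower_bound[OF _ l])
    also have "?F (fs m - fs n) = ys m - ys n" using linear_on_diff[OF F fs(1) fs(1)] fs(2) by simp
    finally show "nX (fs m - fs n) \<le> 1 / Im l * nX (ys m - ys n)" using l by (simp add: field_simps)
  qed auto
  then obtain f where cf: "conv ipx fs f" using X.complete by blast
  have "conv ipx (\<lambda>n. ys n + l *\<^sub>C fs n) (y + l *\<^sub>C f)"
    using X.conv_add[OF _ _ _ _ cy X.conv_scale[OF _ _ cf]] by simp
  moreover have "TS (fs n) = ys n + l *\<^sub>C fs n" for n using fs(2)[of n] by (simp add: algebra_simps)
  ultimately have cT: "conv ipx (\<lambda>n. TS (fs n)) (y + l *\<^sub>C f)" by simp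
  have f: "f \<in> DS" and Tf: "TS f = y + l *\<^sub>C f" using max_closed[OF fsD cf cT] by auto
  have "f \<in> ?D" using contraction_dom_graph_closed[OF K fs(1) f cf] cT Tf by simp
  moreover have "?F f = y" using Tf by simp
  ultimately show "y \<in> ?F ` ?D" by blast
qed

text \<open>\<open>(h|u v) = - (K h|w v)\<close> for all \<open>h\<close>; take \<open>h = u v\<close> and apply Cauchy-Schwarz.\<close>
lemma contraction_dom_adjoint_norm:
  assumes K: "contraction_on H ipH K" and v: "v \<in> DS"
    and adj: "\<And>f. f \<in> contraction_dom K \<Longrightarrow> ipx (TS f) v = ipx f (TS v)"
  shows "nH (u v) \<le> nH (w v)"
proof -
  have uv: "u v \<in> H" and wv: "w v \<in> H" using u_in[OF v] w_in[OF v] .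
  have Kuv: "K (u v) \<in> H" using contraction_on_in[OF K uv] .
  obtain f where f: "f \<in> contraction_dom K" "u f = u v" using contraction_dom_u_onto[OF K uv] by blast
  have fD: "f \<in> DS" and wf: "w f = - K (u v)" using f unfolding contraction_dom_iff by auto
  have "ipH (u v) (u v) = - ipH (K (u v)) (w v)"
    using symmetric_iff_uw[OF fD v] adj[OF f(1)] f(2) wf B.ip_minusL[OF Kuv wv] by simp
  then have "cmod (ipH (u v) (u v)) = cmod (ipH (K (u v)) (w v))" by simp
  moreover have "cmod (ipH (u v) (u v)) = (nH (u v))\<^sup>2" using B.ip_self[OF uv] by (simp add: norm_power)
  ultimately have "(nH (u v))\<^sup>2 = cmod (ipH (K (u v)) (w v))" by simp
  also have "\<dots> \<le> nH (K (u v)) * nH (w v)" by (rule B.cauchy_schwarz[OF Kuv wv])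
  also have "\<dots> \<le> nH (u v) * nH (w v)"
    by (rule mult_right_mono[OF contraction_on_le[OF K uv]]) (use wv in simp)
  finally have "nH (u v) * nH (u v) \<le> nH (u v) * nH (w v)" by (simp add: power2_eq_square)
  then show ?thesis using B.nrm_ge0[OF uv] B.nrm_ge0[OF wv] by (cases "nH (u v) = 0") (auto simp: less_le)
qed

lemma contraction_dom_range_orth_zero:
  assumes K: "contraction_on H ipH K" and l: "Im l > 0"
    and orth: "\<forall>y\<in>(\<lambda>x. TS x - l *\<^sub>C x) ` contraction_dom K. ipx y v = 0"
  shows "v = 0"
proof -
  have adj: "ipx (TS f) v = ipx f (cnj l *\<^sub>C v)" if "f \<in> contraction_dom K" for f
    using orth that by (simp add: X.ip_diffL X.ip_scaleL X.ip_scaleR)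
  have "ipx (T0 f) v = ipx f (cnj l *\<^sub>C v)" if "f \<in> D0" for f
    using adj[of f] max_extends_min[OF that] min_subset_contraction_dom[OF contraction_on_linear[OF K]]
      that by auto
  note adjT0 = this
  have v: "v \<in> DS" by (rule max_adjointI(1)[OF adjT0])
  have Tv: "TS v = cnj l *\<^sub>C v" by (rule max_adjointI(2)[OF adjT0])
  have "nH (u v) \<le> nH (w v)" using contraction_dom_adjoint_norm[OF K v] adj Tv by simp
  then have "(nH (u v))\<^sup>2 \<le> (nH (w v))\<^sup>2" by (rule power_mono) (use u_in[OF v] in simp)
  then have "Im (ipx (TS v) v) \<ge> 0" using Im_max_eq[OF v] by simp
  moreover have "Im (ipx (TS v) v) = - Im l * (nX v)\<^sup>2"
    unfolding Tv using X.ip_self[of v] by (simp add: X.ip_scaleL)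
  ultimately have "(nX v)\<^sup>2 \<le> 0" using l by (simp add: mult_le_0_iff)
  then show ?thesis using X.nrm_le0_imp_zero[of v] by simp
qed

lemma contraction_dom_m_dissipative:
  assumes K: "contraction_on H ipH K"
  shows "extends_op D0 T0 (contraction_dom K) TS" and "m_dissipative ipx (contraction_dom K) TS"
proof -
  have op: "operator (contraction_dom K) TS"
    using contraction_dom_operator[OF contraction_on_linear[OF K]] .
  show "extends_op D0 T0 (contraction_dom K) TS"
    unfolding extends_op_def
    using op min_subset_contraction_dom[OF contraction_on_linear[OF K]] max_extends_min by blast
  have "(\<lambda>x. TS x - l *\<^sub>C x) ` contraction_dom K = UNIV" if l: "Im l > 0" for l
    using X.closed_subspace_eq_if_orth_zero[OF contraction_dom_range_closed[OF K l]]
      contraction_dom_range_orth_zero[OF K l] by blast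
  then show "m_dissipative ipx (contraction_dom K) TS"
    using X.m_dissipativeI[OF op contraction_dom_dissipative[OF K]] by blast
qed

subsection \<open>Every m-dissipative extension comes from a contraction\<close>

text \<open>Otherwise \<open>c = (T f|g) - (f|T0 g) \<noteq> 0\<close> for some \<open>g \<in> D0\<close>; as \<open>(T0 g|g)\<close> is real,
  \<open>Im (T (f + z g)|f + z g) = Im (T f|f) + s \<bar>c\<bar>\<^sup>2\<close> for \<open>z = - i s c\<close>, which is positive
  for large \<open>s\<close>.\<close>
lemma dissipative_extension_adjoint_identity:
  assumes ext: "extends_op D0 T0 D T" and dis: "dissipative_op ipx D T"
    and f: "f \<in> D" and g0: "g \<in> D0"
  shows "ipx (T f) g = ipx f (T0 g)"
proof (rule ccontr)
  have lin: "linear_on D T" and gD: "g \<in> D" and Tg: "T g = T0 g"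
    using ext g0 unfolding extends_op_def operator_def by auto
  define c where "c = ipx (T f) g - ipx f (T0 g)"
  define s where "s = (1 - Im (ipx (T f) f)) / (cmod c)\<^sup>2"
  define z where "z = - \<i> * complex_of_real s * c"
  assume "ipx (T f) g \<noteq> ipx f (T0 g)"
  then have c0: "c \<noteq> 0" unfolding c_def by simp
  have x: "f + z *\<^sub>C g \<in> D"
    using linear_on_subspaceC[OF lin] f gD subspaceC_add subspaceC_scale by blast
  have Tx: "T (f + z *\<^sub>C g) = T f + z *\<^sub>C T0 g"
    using linear_on_add[OF lin f] linear_on_scale[OF lin gD] Tg
      subspaceC_scale[OF linear_on_subspaceC[OF lin] gD] by simp
  have "ipx (T0 g) g = cnj (ipx (T0 g) g)"
    using max_adjoint[OF subsetD[OF min_subset_max g0] g0] max_extends_min[OF g0]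
      X.ip_sym[of "T0 g" g] by simp
  from arg_cong[OF this, of Im] have real: "Im (ipx (T0 g) g) = 0" by simp
  have "ipx (T f + z *\<^sub>C T0 g) (f + z *\<^sub>C g) =
      ipx (T f) f + (cnj z * ipx (T f) g + z * ipx (T0 g) f) + (z * cnj z) * ipx (T0 g) g"
    by (simp add: X.ip_addL X.ip_addR X.ip_scaleL X.ip_scaleR algebra_simps)
  also have "cnj z * ipx (T f) g + z * ipx (T0 g) f
      = cnj z * c + (cnj z * ipx f (T0 g) + cnj (cnj z * ipx f (T0 g)))"
    unfolding c_def X.ip_sym[of f "T0 g", OF UNIV_I UNIV_I] by (simp add: algebra_simps)
  finally have "ipx (T f + z *\<^sub>C T0 g) (f + z *\<^sub>C g) = ipx (T f) f + cnj z * c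
      + (cnj z * ipx f (T0 g) + cnj (cnj z * ipx f (T0 g))) + (z * cnj z) * ipx (T0 g) g"
    by (simp add: algebra_simps)
  moreover have "Im ((z * cnj z) * ipx (T0 g) g) = 0"
    using complex_norm_square[of z] real by simp
  moreover have "Im (cnj z * c) = s * (cmod c)\<^sup>2"
  proof -
    have "cnj z * c = \<i> * complex_of_real s * (c * cnj c)" unfolding z_def by (simp add: algebra_simps)
    also have "c * cnj c = complex_of_real ((cmod c)\<^sup>2)" using complex_norm_square[of c] by simp
    finally show ?thesis by simp
  qed
  moreover have "s * (cmod c)\<^sup>2 = 1 - Im (ipx (T f) f)" unfolding s_def using c0 by simp
  ultimately have "Im (ipx (T (f + z *\<^sub>C g)) (f + z *\<^sub>C g)) = 1" unfolding Tx by simp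
  then show False using dis x unfolding dissipative_op_def by fastforce
qed

lemma dissipative_extension_restricts_max:
  assumes ext: "extends_op D0 T0 D T" and dis: "dissipative_op ipx D T" and f: "f \<in> D"
  shows "f \<in> DS" and "TS f = T f"
proof -
  have adj: "ipx (T0 g) f = ipx g (T f)" if "g \<in> D0" for g
    using dissipative_extension_adjoint_identity[OF ext dis f that]
      X.ip_sym[of "T f" g] X.ip_sym[of "T0 g" f] by simp
  show "f \<in> DS" by (rule max_adjointI(1)[OF adj])
  show "TS f = T f" by (rule max_adjointI(2)[OF adj])
qed

text \<open>Adjoining \<open>p\<close> to \<open>D\<close> keeps \<open>TS\<close> dissipative, so maximality forces \<open>p \<in> D\<close>.\<close>
lemma m_dissipative_absorbs:
  assumes m: "m_dissipative ipx D TS" and DDS: "D \<subseteq> DS" and p: "p \<in> DS"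
    and cond: "\<And>f c. f \<in> D \<Longrightarrow> nH (w f + c *\<^sub>C w p) \<le> nH (u f + c *\<^sub>C u p)"
  shows "p \<in> D"
proof -
  have Ds: "subspaceC D" using X.m_dissipative_subspace[OF m] .
  define D' where "D' = {f + c *\<^sub>C p | f c. f \<in> D}"
  have D'_iff: "x \<in> D' \<longleftrightarrow> (\<exists>f c. f \<in> D \<and> x = f + c *\<^sub>C p)" for x unfolding D'_def by blast
  have "subspaceC D'" unfolding D'_def by (rule subspaceC_adjoin[OF Ds])
  moreover have D'DS: "D' \<subseteq> DS"
    unfolding D'_def using DDS p max_subspace subspaceC_add subspaceC_scale by blast
  moreover have "dissipative_op ipx D' TS"
    unfolding dissipative_op_def
  proof
    fix x assume "x \<in> D'"
    then obtain f c where fc: "f \<in> D" "x = f + c *\<^sub>C p" unfolding D'_iff by blast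
    have fS: "f \<in> DS" using fc DDS by blast
    have "u x = u f + c *\<^sub>C u p" "w x = w f + c *\<^sub>C w p"
      unfolding fc(2) using linear_on_add[OF u_linear fS] linear_on_add[OF w_linear fS]
        linear_on_scale[OF u_linear p] linear_on_scale[OF w_linear p] subspaceC_scale[OF max_subspace p]
      by auto
    then show "Im (ipx (TS x) x) \<le> 0"
      using cond[OF fc(1)] dissipative_iff_norm_w_le_u D'DS \<open>x \<in> D'\<close> by auto
  qed
  moreover have "D \<subseteq> D'"
  proof
    fix f assume "f \<in> D"
    then show "f \<in> D'" unfolding D'_iff by (intro exI[of _ f] exI[of _ "0::complex"]) simp
  qed
  ultimately have "D' = D"
    using X.m_dissipative_maximal[OF m linear_on_subset[OF max_linear]] by blast
  moreover have "p \<in> D'" unfolding D'_iff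
    by (intro exI[of _ 0] exI[of _ "1::complex"]) (simp add: subspaceC_zero[OF Ds] scaleC_one)
  ultimately show ?thesis by blast
qed

lemma m_dissipative_norm_w_le_u:
  "m_dissipative ipx D TS \<Longrightarrow> D \<subseteq> DS \<Longrightarrow> f \<in> D \<Longrightarrow> nH (w f) \<le> nH (u f)"
  using X.m_dissipative_imp_dissipative dissipative_iff_norm_w_le_u
  unfolding dissipative_op_def by blast

text \<open>\<open>\<parallel>w f\<parallel> \<le> \<parallel>u f\<parallel>\<close> on \<open>D\<close> makes \<open>w\<close> Cauchy along any sequence on which \<open>u\<close> is, and
  the limit point \<open>(h, k)\<close> is absorbed into \<open>D\<close> by passing to the limit in \<open>m_dissipative_absorbs\<close>.\<close>
lemma m_dissipative_u_image_closed:
  assumes m: "m_dissipative ipx D TS" and DDS: "D \<subseteq> DS"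
  shows "B.closed_subspace (u ` D)"
proof (rule B.closed_subspaceI)
  have Ds: "subspaceC D" using X.m_dissipative_subspace[OF m] .
  have fS: "f \<in> D \<Longrightarrow> f \<in> DS" for f using DDS by blast
  have wu: "f \<in> D \<Longrightarrow> nH (w f) \<le> nH (u f)" for f by (rule m_dissipative_norm_w_le_u[OF m DDS])
  show "u ` D \<subseteq> H" using u_in DDS by blast
  show "subspaceC (u ` D)" by (rule subspaceC_image[OF linear_on_subset[OF u_linear Ds DDS]])
  fix ys h assume ys: "\<And>n. ys n \<in> u ` D" and h: "h \<in> H" and ch: "conv ipH ys h"
  obtain fs where fs: "\<And>n. fs n \<in> D" "\<And>n. u (fs n) = ys n" by (rule obtain_preimage_seq[where ys = ys, OF ys]) blast
  have ysH: "ys n \<in> H" for n using u_in[OF fS[OF fs(1)[of n]]] unfolding fs(2) .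
  have wfs: "w (fs n) \<in> H" for n using w_in[OF fS[OF fs(1)[of n]]] .
  have "cauchy ipH (\<lambda>n. w (fs n))"
  proof (rule cauchy_by_bound[OF B.conv_cauchy[OF ysH h ch], of 1])
    fix m n
    have "fs m - fs n \<in> D" using subspaceC_diff[OF Ds fs(1) fs(1)] .
    then show "nH (w (fs m) - w (fs n)) \<le> 1 * nH (ys m - ys n)"
      using wu linear_on_diff[OF w_linear fS fS] linear_on_diff[OF u_linear fS fS] fs by fastforce
  qed simp
  then obtain k where k: "k \<in> H" "conv ipH (\<lambda>n. w (fs n)) k" using B.complete[of "\<lambda>n. w (fs n)"] wfs by blast
  obtain p where p: "p \<in> DS" "u p = h" "w p = k" using uw_onto[OF h k(1)] by blast
  have "p \<in> D"
  proof (rule m_dissipative_absorbs[OF m DDS p(1)])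
    fix f c assume f: "f \<in> D"
    have "nH (w f + c *\<^sub>C w (fs n)) \<le> nH (u f + c *\<^sub>C ys n)" for n
    proof -
      have "f + c *\<^sub>C fs n \<in> D" using subspaceC_add[OF Ds f subspaceC_scale[OF Ds fs(1)]] .
      moreover have "w (f + c *\<^sub>C fs n) = w f + c *\<^sub>C w (fs n)" "u (f + c *\<^sub>C fs n) = u f + c *\<^sub>C ys n"
        using linear_on_add[OF w_linear fS[OF f]] linear_on_add[OF u_linear fS[OF f]] fs(2)
          linear_on_scale[OF w_linear fS[OF fs(1)]] linear_on_scale[OF u_linear fS[OF fs(1)]]
          subspaceC_scale[OF max_subspace fS[OF fs(1)]] by auto
      ultimately show ?thesis using wu[of "f + c *\<^sub>C fs n"] by simp
    qed
    moreover have "(\<lambda>n. nH (w f + c *\<^sub>C w (fs n))) \<longlonglongrightarrow> nH (w f + c *\<^sub>C k)"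
      using B.conv_affine_nrm[OF wfs k(1) k(2) w_in[OF fS[OF f]]] .
    moreover have "(\<lambda>n. nH (u f + c *\<^sub>C ys n)) \<longlonglongrightarrow> nH (u f + c *\<^sub>C h)"
      using B.conv_affine_nrm[OF ysH h ch u_in[OF fS[OF f]]] .
    ultimately show "nH (w f + c *\<^sub>C w p) \<le> nH (u f + c *\<^sub>C u p)"
      using p by (simp add: LIMSEQ_le)
  qed
  then show "h \<in> u ` D" using p by blast
qed

lemma m_dissipative_u_image_orth_zero:
  assumes m: "m_dissipative ipx D TS" and DDS: "D \<subseteq> DS"
    and v: "v \<in> H" and orth: "\<forall>y\<in>u ` D. ipH y v = 0"
  shows "v = 0"
proof -
  obtain p where p: "p \<in> DS" "u p = v" "w p = 0" using uw_onto[OF v B.zero_in] by blast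
  have "p \<in> D"
  proof (rule m_dissipative_absorbs[OF m DDS p(1)])
    fix f c assume f: "f \<in> D"
    have uf: "u f \<in> H" using u_in DDS f by blast
    have "(nH (u f + c *\<^sub>C v))\<^sup>2 = (nH (u f))\<^sup>2 + (nH (c *\<^sub>C v))\<^sup>2 + 2 * Re (ipH (u f) (c *\<^sub>C v))"
      using uf v by (simp add: B.nrm_add_sq)
    also have "ipH (u f) (c *\<^sub>C v) = 0" using orth f B.ip_scaleR[OF uf v] by simp
    finally have "(nH (u f))\<^sup>2 \<le> (nH (u f + c *\<^sub>C v))\<^sup>2" by simp
    then have "nH (u f) \<le> nH (u f + c *\<^sub>C v)" by (rule power2_le_imp_le) (use uf v in simp)
    then show "nH (w f + c *\<^sub>C w p) \<le> nH (u f + c *\<^sub>C u p)"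
      using m_dissipative_norm_w_le_u[OF m DDS f] p by simp
  qed
  then have "ipH v v = 0" using orth p(2) by blast
  then show "v = 0" using B.ip_self_zero v by blast
qed

lemma m_dissipative_restriction_is_contraction_dom:
  assumes m: "m_dissipative ipx D TS" and DDS: "D \<subseteq> DS"
  shows "\<exists>K. contraction_on H ipH K \<and> D = contraction_dom K"
proof -
  have Ds: "subspaceC D" using X.m_dissipative_subspace[OF m] .
  have onto: "u ` D = H"
    using B.closed_subspace_eq_if_orth_zero[OF m_dissipative_u_image_closed[OF m DDS]]
      m_dissipative_u_image_orth_zero[OF m DDS] by blast
  have "- w f \<in> H" and "nH (- w f) \<le> nH (u f)" if "f \<in> D" for f
    using that DDS w_in m_dissipative_norm_w_le_u[OF m DDS that] B.nrm_minus by auto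
  then obtain K where K: "contraction_on H ipH K" and Ku: "\<forall>f\<in>D. K (u f) = - w f"
    using B.contraction_of_dominated_graph[OF Ds linear_on_subset[OF u_linear Ds DDS] onto
        linear_on_uminus[OF linear_on_subset[OF w_linear Ds DDS]]] by blast
  have "D \<subseteq> contraction_dom K" using DDS Ku unfolding contraction_dom_def by (auto simp: add_eq_0_iff)
  moreover have "linear_on (contraction_dom K) TS"
    using contraction_dom_operator[OF contraction_on_linear[OF K]] unfolding operator_def .
  ultimately have "contraction_dom K = D"
    by (intro X.m_dissipative_maximal[OF m _ _ _ contraction_dom_dissipative[OF K]]) simp_all
  then show ?thesis using K by blast
qed

lemma m_dissipative_extension_is_contraction_dom:
  assumes ext: "extends_op D0 T0 D T" and m: "m_dissipative ipx D T"
  shows "\<exists>K. contraction_on H ipH K \<and> D = contraction_dom K \<and> (\<forall>\<psi>\<in>D. T \<psi> = TS \<psi>)"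
proof -
  have dis: "dissipative_op ipx D T" by (rule X.m_dissipative_imp_dissipative[OF m])
  have DDS: "D \<subseteq> DS" and TS: "\<And>f. f \<in> D \<Longrightarrow> TS f = T f"
    using dissipative_extension_restricts_max[OF ext dis] by auto
  have "operator D TS"
    using linear_on_subset[OF max_linear _ DDS] m unfolding m_dissipative_def operator_def linear_on_def
    by blast
  then have "m_dissipative ipx D TS" using X.m_dissipative_cong[OF m] TS by blast
  then obtain K where "contraction_on H ipH K" "D = contraction_dom K"
    using m_dissipative_restriction_is_contraction_dom[OF _ DDS] by blast
  then show ?thesis using TS by (intro exI[of _ K]) simp
qed

lemma contraction_dom_inj:
  assumes K1: "contraction_on H ipH K1" and K2: "contraction_on H ipH K2"
    and eq: "contraction_dom K1 = contraction_dom K2" and h: "h \<in> H"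
  shows "K1 h = K2 h"
proof -
  obtain p where p: "p \<in> DS" "u p = h" "w p = - K1 h"
    using uw_onto[OF h B.minus_in[OF contraction_on_in[OF K1 h]]] by blast
  then have "p \<in> contraction_dom K1" unfolding contraction_dom_iff by simp
  then have "p \<in> contraction_dom K2" using eq by simp
  then show ?thesis using p unfolding contraction_dom_iff by simp
qed

subsection \<open>Selfadjoint extensions\<close>

lemma adj_dom_contraction_dom:
  assumes K: "contraction_on H ipH K"
  shows "adj_dom ipx (contraction_dom K) TS = {g\<in>DS. \<forall>h\<in>H. ipH h (u g) = - ipH (K h) (w g)}"
proof (rule equalityI; rule subsetI)
  fix g assume "g \<in> adj_dom ipx (contraction_dom K) TS"
  then obtain k where k: "\<And>f. f \<in> contraction_dom K \<Longrightarrow> ipx (TS f) g = ipx f k"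
    unfolding adj_dom_def by blast
  have adj0: "ipx (T0 f) g = ipx f k" if "f \<in> D0" for f
    using k[of f] that max_extends_min[OF that]
      min_subset_contraction_dom[OF contraction_on_linear[OF K]] by auto
  have g: "g \<in> DS" by (rule max_adjointI(1)[OF adj0])
  have Tg: "TS g = k" by (rule max_adjointI(2)[OF adj0])
  have "ipH h (u g) = - ipH (K h) (w g)" if h: "h \<in> H" for h
  proof -
    obtain f where f: "f \<in> contraction_dom K" "u f = h" using contraction_dom_u_onto[OF K h] by blast
    have fD: "f \<in> DS" and wf: "w f = - K h" using f unfolding contraction_dom_iff by auto
    show ?thesis
      using symmetric_iff_uw[OF fD g] k[OF f(1)] Tg f(2) wf
        B.ip_minusL[OF contraction_on_in[OF K h] w_in[OF g]] by simp
  qed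
  then show "g \<in> {g\<in>DS. \<forall>h\<in>H. ipH h (u g) = - ipH (K h) (w g)}" using g by blast
next
  fix g assume "g \<in> {g\<in>DS. \<forall>h\<in>H. ipH h (u g) = - ipH (K h) (w g)}"
  then have g: "g \<in> DS" and E: "\<And>h. h \<in> H \<Longrightarrow> ipH h (u g) = - ipH (K h) (w g)" by auto
  have "ipx (TS f) g = ipx f (TS g)" if "f \<in> contraction_dom K" for f
  proof -
    have fD: "f \<in> DS" and wf: "w f = - K (u f)" using that unfolding contraction_dom_iff by auto
    have "ipH (u f) (u g) = ipH (w f) (w g)"
      using E[OF u_in[OF fD]] wf B.ip_minusL[OF contraction_on_in[OF K u_in[OF fD]] w_in[OF g]] by simp
    then show ?thesis using symmetric_iff_uw[OF fD g] by simp
  qed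
  then show "g \<in> adj_dom ipx (contraction_dom K) TS" unfolding adj_dom_def by blast
qed

lemma contraction_dom_symmetric_iff_isometric:
  assumes K: "contraction_on H ipH K"
  shows "(\<forall>f\<in>contraction_dom K. \<forall>g\<in>contraction_dom K. ipx (TS f) g = ipx f (TS g)) \<longleftrightarrow>
    (\<forall>h1\<in>H. \<forall>h2\<in>H. ipH (K h1) (K h2) = ipH h1 h2)"
proof -
  have uw: "ipx (TS f) g = ipx f (TS g) \<longleftrightarrow> ipH (K (u f)) (K (u g)) = ipH (u f) (u g)"
    if "f \<in> contraction_dom K" "g \<in> contraction_dom K" for f g
  proof -
    have f: "f \<in> DS" "w f = - K (u f)" and g: "g \<in> DS" "w g = - K (u g)"
      using that unfolding contraction_dom_iff by auto
    show ?thesis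
      using symmetric_iff_uw[OF f(1) g(1)] f g contraction_on_in[OF K u_in] B.ip_minusL B.ip_minusR
      by auto
  qed
  show ?thesis
  proof
    assume "\<forall>f\<in>contraction_dom K. \<forall>g\<in>contraction_dom K. ipx (TS f) g = ipx f (TS g)"
    then show "\<forall>h1\<in>H. \<forall>h2\<in>H. ipH (K h1) (K h2) = ipH h1 h2"
      using uw contraction_dom_u_onto[OF K] by metis
  next
    assume "\<forall>h1\<in>H. \<forall>h2\<in>H. ipH (K h1) (K h2) = ipH h1 h2"
    then show "\<forall>f\<in>contraction_dom K. \<forall>g\<in>contraction_dom K. ipx (TS f) g = ipx f (TS g)"
      using uw u_in contraction_dom_subset by blast
  qed
qed

lemma contraction_dom_dense: "linear_on H K \<Longrightarrow> dense_in ipx (contraction_dom K) UNIV"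
  using min_subset_contraction_dom[of K] min_dense unfolding dense_in_def by blast

lemma selfadjoint_contraction_dom_imp_unitary:
  assumes K: "contraction_on H ipH K" and sa: "selfadjoint_op ipx (contraction_dom K) TS"
  shows "unitary_on H ipH K"
proof -
  have iso: "\<And>h1 h2. h1 \<in> H \<Longrightarrow> h2 \<in> H \<Longrightarrow> ipH (K h1) (K h2) = ipH h1 h2"
    using sa contraction_dom_symmetric_iff_isometric[OF K]
    unfolding selfadjoint_op_def symmetric_op_def by blast
  have adj: "adj_dom ipx (contraction_dom K) TS = contraction_dom K"
    using sa unfolding selfadjoint_op_def by blast
  have "inj_on K H"
  proof (rule inj_onI)
    fix x y assume x: "x \<in> H" and y: "y \<in> H" and eq: "K x = K y"
    have "K (x - y) = 0" using linear_on_diff[OF contraction_on_linear[OF K] x y] eq by simp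
    then have "ipH (x - y) (x - y) = 0" using iso[of "x - y" "x - y"] x y by simp
    then show "x = y" using B.ip_self_zero[of "x - y"] x y by simp
  qed
  moreover have "H \<subseteq> K ` H"
  proof
    fix k assume k: "k \<in> H"
    obtain z where z: "z \<in> H" "\<And>h. h \<in> H \<Longrightarrow> ipH (K h) k = ipH h z"
      using B.contraction_adjoint[OF K k] by blast
    obtain p where p: "p \<in> DS" "u p = z" "w p = - k" using uw_onto[OF z(1) B.minus_in[OF k]] by blast
    have "p \<in> adj_dom ipx (contraction_dom K) TS"
      unfolding adj_dom_contraction_dom[OF K]
      using p z B.ip_minusR[OF k contraction_on_in[OF K]] by simp
    then have "K z = k" using p unfolding adj contraction_dom_iff by simp
    then show "k \<in> K ` H" using z(1) by blast
  qed
  ultimately show ?thesis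
    unfolding unitary_on_def bij_betw_def
    using contraction_on_linear[OF K] contraction_on_in[OF K] iso by blast
qed

lemma unitary_imp_selfadjoint_contraction_dom:
  assumes K: "contraction_on H ipH K" and un: "unitary_on H ipH K"
  shows "selfadjoint_op ipx (contraction_dom K) TS"
proof -
  have iso: "\<And>h1 h2. h1 \<in> H \<Longrightarrow> h2 \<in> H \<Longrightarrow> ipH (K h1) (K h2) = ipH h1 h2"
    and onto: "K ` H = H" using un unfolding unitary_on_def bij_betw_def by auto
  have char: "(\<forall>h\<in>H. ipH h (u g) = - ipH (K h) (w g)) \<longleftrightarrow> w g = - K (u g)" if g: "g \<in> DS" for g
  proof -
    have ug: "u g \<in> H" and wg: "w g \<in> H" and Kug: "K (u g) \<in> H"
      using u_in[OF g] w_in[OF g] contraction_on_in[OF K u_in[OF g]] by auto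
    have "(\<forall>h\<in>H. ipH h (u g) = - ipH (K h) (w g)) \<longleftrightarrow> (\<forall>h\<in>H. ipH (K h) (K (u g) + w g) = 0)"
      using iso[OF _ ug] B.ip_addR[OF Kug wg] contraction_on_in[OF K]
      by (simp add: eq_neg_iff_add_eq_0)
    also have "\<dots> \<longleftrightarrow> (\<forall>h\<in>K ` H. ipH h (K (u g) + w g) = 0)" by auto
    also have "\<dots> \<longleftrightarrow> (\<forall>h\<in>H. ipH h (K (u g) + w g) = 0)" unfolding onto ..
    also have "\<dots> \<longleftrightarrow> K (u g) + w g = 0"
      using B.ip_eq_zero_all[of "K (u g) + w g"] Kug wg by auto
    finally show ?thesis by (simp add: eq_neg_iff_add_eq_0 add.commute)
  qed
  have "adj_dom ipx (contraction_dom K) TS = contraction_dom K"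
    unfolding adj_dom_contraction_dom[OF K]
  proof (intro equalityI subsetI)
    fix g assume "g \<in> {g\<in>DS. \<forall>h\<in>H. ipH h (u g) = - ipH (K h) (w g)}"
    then show "g \<in> contraction_dom K" using char unfolding contraction_dom_iff by blast
  next
    fix g assume "g \<in> contraction_dom K"
    then show "g \<in> {g\<in>DS. \<forall>h\<in>H. ipH h (u g) = - ipH (K h) (w g)}"
      using char unfolding contraction_dom_iff by blast
  qed
  then show ?thesis
    unfolding selfadjoint_op_def symmetric_op_def
    using contraction_dom_dense[OF contraction_on_linear[OF K]]
      contraction_dom_symmetric_iff_isometric[OF K] iso by blast
qed

lemma selfadjoint_contraction_dom_iff_unitary:
  "contraction_on H ipH K \<Longrightarrow> selfadjoint_op ipx (contraction_dom K) TS \<longleftrightarrow> unitary_on H ipH K"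
  using selfadjoint_contraction_dom_imp_unitary unitary_imp_selfadjoint_contraction_dom by blast

lemma m_dissipative_extension_iff:
  assumes ext: "extends_op D0 T0 D T"
  shows "m_dissipative ipx D T \<longleftrightarrow>
    (\<exists>K. contraction_on H ipH K \<and> D = contraction_dom K \<and> (\<forall>\<psi>\<in>D. T \<psi> = TS \<psi>))"
proof
  assume "\<exists>K. contraction_on H ipH K \<and> D = contraction_dom K \<and> (\<forall>\<psi>\<in>D. T \<psi> = TS \<psi>)"
  then obtain K where K: "contraction_on H ipH K" "D = contraction_dom K" "\<forall>\<psi>\<in>D. T \<psi> = TS \<psi>"
    by blast
  show "m_dissipative ipx D T"
    using X.m_dissipative_cong[OF contraction_dom_m_dissipative(2)[OF K(1)]] ext K(2,3)
    unfolding extends_op_def by simp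
qed (rule m_dissipative_extension_is_contraction_dom[OF ext])

end

section \<open>The operators \<open>M\<close> and \<open>M*\<close>\<close>

lemma fst_scaleC [simp]: "fst (c *\<^sub>C p) = c *\<^sub>C fst p" by (simp add: scaleC_prod_def)
lemma snd_scaleC [simp]: "snd (c *\<^sub>C p) = c *\<^sub>C snd p" by (simp add: scaleC_prod_def)
lemma pair_scaleC: "c *\<^sub>C (a, b) = (c *\<^sub>C a, c *\<^sub>C b)" by (simp add: scaleC_prod_def)

lemma nonneg_bound_exists:
  assumes "\<exists>C. \<forall>x\<in>A. f x \<le> C * g x" and "\<And>x. x \<in> A \<Longrightarrow> 0 \<le> (g x :: real)"
  shows "\<exists>C\<ge>0. \<forall>x\<in>A. f x \<le> C * g x"
proof -
  obtain C where C: "\<forall>x\<in>A. f x \<le> C * g x" using assms(1) by blast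
  have "f x \<le> max 0 C * g x" if "x \<in> A" for x
    using C that mult_right_mono[OF max.cobounded2[of C 0] assms(2)[OF that]] by fastforce
  then show ?thesis by (intro exI[of _ "max 0 C"]) simp
qed

lemma inner_product_on_ip2:
  assumes ip: "inner_product_on (UNIV::'x::cvec set) ip"
  shows "inner_product_on (UNIV::('x \<times> 'x) set) (ip2 ip)"
proof -
  interpret I: inner_product_space "UNIV::'x set" ip by (rule inner_product_space.intro[OF ip])
  show ?thesis unfolding inner_product_on_def
  proof (intro conjI ballI allI impI)
    show "subspaceC (UNIV::('x \<times> 'x) set)" by (rule subspaceC_UNIV)
    fix x y z :: "'x \<times> 'x" and c :: complex
    show "ip2 ip (x + y) z = ip2 ip x z + ip2 ip y z" unfolding ip2_def by (simp add: I.ip_addL)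
    show "ip2 ip y x = cnj (ip2 ip x y)" unfolding ip2_def
      using I.ip_sym[of "fst x" "fst y"] I.ip_sym[of "snd x" "snd y"] by simp
    show "ip2 ip (c *\<^sub>C x) y = c * ip2 ip x y" unfolding ip2_def by (simp add: I.ip_scaleL algebra_simps)
    show "0 \<le> Re (ip2 ip x x)" unfolding ip2_def using I.ip_self_Re by simp
    show "Im (ip2 ip x x) = 0" unfolding ip2_def using I.ip_self_Im by simp
    assume "ip2 ip x x = 0"
    from arg_cong[OF this, of Re] have "Re (ip (fst x) (fst x)) + Re (ip (snd x) (snd x)) = 0"
      by (simp add: ip2_def)
    then have "Re (ip (fst x) (fst x)) = 0" "Re (ip (snd x) (snd x)) = 0"
      using I.ip_self_Re[OF UNIV_I, of "fst x"] I.ip_self_Re[OF UNIV_I, of "snd x"] by linarith+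
    then have "ip (fst x) (fst x) = 0" "ip (snd x) (snd x) = 0"
      using I.ip_self_Im by (auto simp: complex_eq_iff)
    then show "x = 0" using I.ip_self_zero by (simp add: prod_eq_iff)
  qed
qed

lemma nrm_ip2_sq:
  "inner_product_on UNIV ip \<Longrightarrow> (nrm (ip2 ip) x)\<^sup>2 = (nrm ip (fst x))\<^sup>2 + (nrm ip (snd x))\<^sup>2"
  using inner_product_space.nrm_sq[OF inner_product_space.intro, of UNIV ip]
    inner_product_space.nrm_sq[OF inner_product_space.intro[OF inner_product_on_ip2], of ip x]
  unfolding ip2_def by simp

lemma nrm_ip2_bounds:
  assumes "inner_product_on UNIV ip"
  shows "nrm ip (fst x) \<le> nrm (ip2 ip) x" and "nrm ip (snd x) \<le> nrm (ip2 ip) x"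
    and "nrm (ip2 ip) x \<le> nrm ip (fst x) + nrm ip (snd x)"
proof -
  interpret I: inner_product_space UNIV ip by (rule inner_product_space.intro[OF assms])
  interpret I2: inner_product_space UNIV "ip2 ip"
    by (rule inner_product_space.intro[OF inner_product_on_ip2[OF assms]])
  have sq: "(I2.nm x)\<^sup>2 = (I.nm (fst x))\<^sup>2 + (I.nm (snd x))\<^sup>2" by (rule nrm_ip2_sq[OF assms])
  show "I.nm (fst x) \<le> I2.nm x" by (rule power2_le_imp_le) (use sq in simp_all)
  show "I.nm (snd x) \<le> I2.nm x" by (rule power2_le_imp_le) (use sq in simp_all)
  have "(I2.nm x)\<^sup>2 \<le> (I.nm (fst x) + I.nm (snd x))\<^sup>2"
    using sq I.nrm_ge0[of "fst x"] I.nrm_ge0[of "snd x"] by (simp add: power2_sum)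
  then show "I2.nm x \<le> I.nm (fst x) + I.nm (snd x)" by (rule power2_le_imp_le) simp
qed

lemma hilbert_UNIV_ip2:
  assumes X: "hilbert_on (UNIV::'x::cvec set) ip"
  shows "hilbert_UNIV (ip2 ip :: 'x \<times> 'x \<Rightarrow> _)"
proof -
  interpret I: hilbert_space "UNIV::'x set" ip by (rule hilbert_on_imp_hilbert_space[OF X])
  have ipo: "inner_product_on (UNIV::'x set) ip" using X unfolding hilbert_on_def by blast
  interpret I2: inner_product_space "UNIV::('x \<times> 'x) set" "ip2 ip"
    by (rule inner_product_space.intro[OF inner_product_on_ip2[OF ipo]])
  show ?thesis unfolding hilbert_UNIV_def
  proof (unfold_locales)
    fix xs :: "nat \<Rightarrow> 'x \<times> 'x" assume cs: "cauchy (ip2 ip) xs"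
    have "cauchy ip (\<lambda>n. fst (xs n))"
    proof (rule cauchy_by_bound[OF cs, of 1])
      show "I.nm (fst (xs m) - fst (xs n)) \<le> 1 * I2.nm (xs m - xs n)" for m n
        using nrm_ip2_bounds(1)[OF ipo, of "xs m - xs n"] by simp
    qed simp
    moreover have "cauchy ip (\<lambda>n. snd (xs n))"
    proof (rule cauchy_by_bound[OF cs, of 1])
      show "I.nm (snd (xs m) - snd (xs n)) \<le> 1 * I2.nm (xs m - xs n)" for m n
        using nrm_ip2_bounds(2)[OF ipo, of "xs m - xs n"] by simp
    qed simp
    ultimately obtain p q where p: "conv ip (\<lambda>n. fst (xs n)) p" and q: "conv ip (\<lambda>n. snd (xs n)) q"
      using I.complete by blast
    have "conv (ip2 ip) xs (p, q)"
      unfolding conv_def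
    proof (rule Lim_null_comparison[OF always_eventually])
      show "\<forall>n. norm (I2.nm (xs n - (p, q))) \<le> I.nm (fst (xs n) - p) + I.nm (snd (xs n) - q)"
      proof
        fix n
        show "norm (I2.nm (xs n - (p, q))) \<le> I.nm (fst (xs n) - p) + I.nm (snd (xs n) - q)"
          using nrm_ip2_bounds(3)[OF ipo, of "xs n - (p, q)"] by simp
      qed
      show "(\<lambda>n. I.nm (fst (xs n) - p) + I.nm (snd (xs n) - q)) \<longlonglongrightarrow> 0"
        using tendsto_add[OF p[unfolded conv_def] q[unfolded conv_def]] by simp
    qed
    then show "\<exists>x\<in>UNIV. conv (ip2 ip) xs x" by blast
  qed
qed

locale uniformly_positive_weight =
  fixes ipX :: "'x::cvec \<Rightarrow> 'x \<Rightarrow> complex" and S :: "'x \<times> 'x \<Rightarrow> 'x \<times> 'x"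
  assumes X: "hilbert_on UNIV ipX" and S: "bounded_unif_pos_sa ipX S"
begin

sublocale X1: hilbert_UNIV ipX
  unfolding hilbert_UNIV_def by (rule hilbert_on_imp_hilbert_space[OF X])
sublocale X2: hilbert_UNIV "ip2 ipX" by (rule hilbert_UNIV_ip2[OF X])

abbreviation "n2 \<equiv> nrm (ip2 ipX)"

lemma S_linear: "linear_on UNIV S" using S unfolding bounded_unif_pos_sa_def by blast
lemma S_add: "S (x + y) = S x + S y" using linear_on_add[OF S_linear] by simp
lemma S_scale: "S (c *\<^sub>C x) = c *\<^sub>C S x" using linear_on_scale[OF S_linear] by simp
lemma S_diff: "S (x - y) = S x - S y" using linear_on_diff[OF S_linear] by simp
lemma S_sym: "ip2 ipX (S f) g = ip2 ipX f (S g)" using S unfolding bounded_unif_pos_sa_def by blast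

definition cS where "cS = (SOME c. c > 0 \<and> (\<forall>f. Re (ip2 ipX (S f) f) \<ge> c * (n2 f)\<^sup>2))"
definition CS where "CS = (SOME C. C \<ge> 0 \<and> (\<forall>x\<in>UNIV. n2 (S x) \<le> C * n2 x))"

lemma cS: "cS > 0" "Re (ip2 ipX (S f) f) \<ge> cS * (n2 f)\<^sup>2"
proof -
  have "\<exists>c. c > 0 \<and> (\<forall>f. Re (ip2 ipX (S f) f) \<ge> c * (n2 f)\<^sup>2)"
    using S unfolding bounded_unif_pos_sa_def by blast
  from someI_ex[OF this] show "cS > 0" "Re (ip2 ipX (S f) f) \<ge> cS * (n2 f)\<^sup>2"
    unfolding cS_def by blast+
qed

lemma CS: "CS \<ge> 0" "n2 (S x) \<le> CS * n2 x"
proof -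
  have "\<exists>C\<ge>0. \<forall>x\<in>UNIV. n2 (S x) \<le> C * n2 x"
    using S unfolding bounded_unif_pos_sa_def bounded_on_def by (intro nonneg_bound_exists) auto
  from someI_ex[OF this[unfolded Bex_def]] show "CS \<ge> 0" "n2 (S x) \<le> CS * n2 x"
    unfolding CS_def by blast+
qed

lemma S_below: "cS * n2 f \<le> n2 (S f)"
proof -
  have "cS * (n2 f)\<^sup>2 \<le> n2 (S f) * n2 f" using cS(2)[of f] X2.Re_ip_le[of "S f" f] by simp
  then have "(cS * n2 f) * n2 f \<le> n2 (S f) * n2 f" by (simp add: power2_eq_square mult.assoc)
  moreover have "0 \<le> n2 f" "0 \<le> n2 (S f)" by simp_all
  ultimately show ?thesis by (cases "n2 f = 0") (auto intro: mult_right_le_imp_le)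
qed

lemma S_inj: "S x = S y \<Longrightarrow> x = y"
proof -
  assume "S x = S y"
  then have "cS * n2 (x - y) \<le> 0" using S_below[of "x - y"] by (simp add: S_diff)
  then have "n2 (x - y) \<le> 0" using cS(1) by (simp add: mult_le_0_iff)
  then show "x = y" using X2.nrm_le0_imp_zero[of "x - y"] by simp
qed

lemma S_surj: "range S = UNIV"
proof (rule X2.closed_subspace_eq_if_orth_zero)
  show "X2.closed_subspace (range S)"
  proof (rule X2.closed_subspaceI)
    show "range S \<subseteq> UNIV" "subspaceC (range S)" by (simp_all add: subspaceC_image[OF S_linear])
    fix ys y assume ys: "\<And>n. ys n \<in> range S" and cy: "conv (ip2 ipX) ys y"
    obtain fs where fs: "\<And>n. S (fs n) = ys n" by (rule obtain_preimage_seq[where ys = ys, OF ys]) blast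
    have "cauchy (ip2 ipX) fs"
    proof (rule cauchy_by_bound[OF X2.conv_cauchy[OF _ _ cy]])
      show "n2 (fs m - fs n) \<le> 1 / cS * n2 (ys m - ys n)" for m n
        using S_below[of "fs m - fs n"] fs cS(1) by (simp add: S_diff field_simps)
    qed (use cS(1) in auto)
    then obtain f where cf: "conv (ip2 ipX) fs f" using X2.complete by blast
    have "n2 (ys n - S f) \<le> CS * n2 (fs n - f)" for n
      using CS(2)[of "fs n - f"] fs by (simp add: S_diff)
    then have "conv (ip2 ipX) ys (S f)" using X2.conv_by_bound[OF _ _ cf] by blast
    have "y = S f" by (rule X2.conv_unique[OF _ _ _ cy \<open>conv (ip2 ipX) ys (S f)\<close>]) simp_all
    then show "y \<in> range S" by simp
  qed
next
  fix v assume "\<forall>w\<in>range S. ip2 ipX w v = 0"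
  then have "ip2 ipX (S v) v = 0" by blast
  then have "cS * (n2 v)\<^sup>2 \<le> 0" using cS(2)[of v] by simp
  then show "v = 0" using cS(1) X2.nrm_le0_imp_zero[of v] by (simp add: mult_le_0_iff)
qed

lemma S_inv [simp]: "S (inv S y) = y" "inv S (S x) = x"
  using S_surj S_inj by (simp_all add: f_inv_into_f inv_f_f inj_def)

lemma inner_product_on_ipS: "inner_product_on UNIV (ipS ipX S)"
  unfolding inner_product_on_def ipS_def
proof (intro conjI ballI allI impI)
  fix x y z :: "'x \<times> 'x" and c :: complex
  show "subspaceC (UNIV::('x\<times>'x) set)" by (rule subspaceC_UNIV)
  show "ip2 ipX (S (x + y)) z = ip2 ipX (S x) z + ip2 ipX (S y) z" by (simp add: S_add X2.ip_addL)
  show "ip2 ipX (S y) x = cnj (ip2 ipX (S x) y)"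
    using S_sym[of y x] S_sym[of x y] X2.ip_sym[of x "S y"] by simp
  show "ip2 ipX (S (c *\<^sub>C x)) y = c * ip2 ipX (S x) y" by (simp add: S_scale X2.ip_scaleL)
  have "0 \<le> cS * (n2 x)\<^sup>2" using cS(1) by simp
  then show "0 \<le> Re (ip2 ipX (S x) x)" using cS(2)[of x] by linarith
  have "ip2 ipX (S x) x = cnj (ip2 ipX (S x) x)" using S_sym[of x x] X2.ip_sym[of x "S x"] by simp
  from arg_cong[OF this, of Im] show "Im (ip2 ipX (S x) x) = 0" by simp
  assume "ip2 ipX (S x) x = 0"
  then have "cS * (n2 x)\<^sup>2 \<le> 0" using cS(2)[of x] by simp
  then show "x = 0" using cS(1) X2.nrm_le0_imp_zero[of x] by (simp add: mult_le_0_iff)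
qed

sublocale XS: inner_product_space UNIV "ipS ipX S"
  by (rule inner_product_space.intro[OF inner_product_on_ipS])

abbreviation "nS \<equiv> nrm (ipS ipX S)"

lemma nS_sq: "(nS x)\<^sup>2 = Re (ip2 ipX (S x) x)"
  using XS.nrm_sq[of x] unfolding ipS_def by simp

lemma nS_upper: "nS x \<le> sqrt CS * n2 x"
proof -
  have "(nS x)\<^sup>2 \<le> n2 (S x) * n2 x" unfolding nS_sq by (rule X2.Re_ip_le) auto
  also have "\<dots> \<le> CS * n2 x * n2 x" by (rule mult_right_mono[OF CS(2)]) simp
  also have "\<dots> = (sqrt CS * n2 x)\<^sup>2" using CS(1) by (simp add: power_mult_distrib power2_eq_square)
  finally show ?thesis by (rule power2_le_imp_le) (use CS(1) in simp)
qed

lemma nS_lower: "sqrt cS * n2 x \<le> nS x"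
proof -
  have "(sqrt cS * n2 x)\<^sup>2 = cS * (n2 x)\<^sup>2" using cS(1) by (simp add: power_mult_distrib)
  also have "\<dots> \<le> (nS x)\<^sup>2" unfolding nS_sq by (rule cS(2))
  finally show ?thesis by (rule power2_le_imp_le) simp
qed

sublocale XS: hilbert_UNIV "ipS ipX S"
proof (unfold_locales)
  fix xs :: "nat \<Rightarrow> 'x \<times> 'x" assume cs: "cauchy (ipS ipX S) xs"
  have "cauchy (ip2 ipX) xs"
  proof (rule cauchy_by_bound[OF cs])
    show "n2 (xs m - xs n) \<le> 1 / sqrt cS * nS (xs m - xs n)" for m n
      using nS_lower[of "xs m - xs n"] cS(1) by (simp add: field_simps)
  qed (use cS(1) in simp)
  then obtain x where x: "conv (ip2 ipX) xs x" using X2.complete by blast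
  have "conv (ipS ipX S) xs x" by (rule XS.conv_by_bound[OF _ _ x, of _ _ "sqrt CS"]) (simp_all add: nS_upper)
  then show "\<exists>x\<in>UNIV. conv (ipS ipX S) xs x" by blast
qed

lemma invS_add: "inv S (x + y) = inv S x + inv S y"
  using S_inj[of "inv S (x + y)" "inv S x + inv S y"] by (simp add: S_add)

lemma invS_scale: "inv S (c *\<^sub>C x) = c *\<^sub>C inv S x"
  using S_inj[of "inv S (c *\<^sub>C x)" "c *\<^sub>C inv S x"] by (simp add: S_scale)

lemma M_op_linear: "linear_on D B \<Longrightarrow> linear_on (D \<times> D) (M_op S B)"
proof (rule linear_onI)
  assume B: "linear_on D B"
  show "subspaceC (D \<times> D)"
    using linear_on_subspaceC[OF B] unfolding subspaceC_def by (auto simp: zero_prod_def pair_scaleC)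
  fix x y assume "x \<in> D \<times> D" "y \<in> D \<times> D"
  then show "M_op S B (x + y) = M_op S B x + M_op S B y"
    using linear_on_add[OF B] unfolding M_op_def
    by (auto simp: mem_Times_iff invS_add[symmetric] scaleC_add_right)
next
  fix c x assume B: "linear_on D B" and "x \<in> D \<times> D"
  then show "M_op S B (c *\<^sub>C x) = c *\<^sub>C M_op S B x"
    using linear_on_scale[OF B] unfolding M_op_def
    by (auto simp: mem_Times_iff invS_scale[symmetric] pair_scaleC scaleC_scaleC scaleC_minus_right
        mult.commute)
qed

lemma ipS_M_op_left:
  "ipS ipX S (M_op S B f) g = \<i> * ipX (B (snd f)) (fst g) - \<i> * ipX (B (fst f)) (snd g)"
  unfolding ipS_def M_op_def ip2_def by (simp add: X1.ip_scaleL X1.ip_minusL)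

lemma ipS_M_op_right:
  "ipS ipX S f (M_op S B g) = - \<i> * ipX (fst f) (B (snd g)) + \<i> * ipX (snd f) (B (fst g))"
  unfolding ipS_def S_sym[of f] by (simp add: M_op_def ip2_def X1.ip_scaleR X1.ip_minusR)

end

lemma i_mult_solve:
  fixes a b :: complex
  shows "- (\<i> * a) = b \<Longrightarrow> a = \<i> * b" and "\<i> * a = b \<Longrightarrow> a = - \<i> * b"
  by (auto simp: algebra_simps)

locale block_operator = uniformly_positive_weight ipX S
  for ipX :: "'x::cvec \<Rightarrow> 'x \<Rightarrow> complex" and S +
  fixes DA :: "'x set" and A :: "'x \<Rightarrow> 'x"
  assumes A_operator: "operator DA A" and A_symmetric: "symmetric_op ipX DA A"
begin

abbreviation "AD \<equiv> adj_dom ipX DA A"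
abbreviation "Ad \<equiv> adj ipX DA A"

lemma A_linear: "linear_on DA A" using A_operator unfolding operator_def .
lemma DA_dense: "dense_in ipX DA UNIV" using A_symmetric unfolding symmetric_op_def by blast

lemma adj_A:
  assumes g: "g \<in> AD" and f: "f \<in> DA"
  shows "ipX (A f) g = ipX f (Ad g)"
proof -
  have "\<exists>h. \<forall>f\<in>DA. ipX (A f) g = ipX f h" using g unfolding adj_dom_def by blast
  then have "\<forall>f\<in>DA. ipX (A f) g = ipX f (Ad g)" unfolding adj_def by (rule someI_ex)
  then show ?thesis using f by blast
qed

lemma adj_AI:
  assumes "\<And>f. f \<in> DA \<Longrightarrow> ipX (A f) g = ipX f h"
  shows "g \<in> AD" and "Ad g = h"
proof -
  show g: "g \<in> AD" using assms unfolding adj_dom_def by blast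
  show "Ad g = h" by (rule X1.dense_ext[OF DA_dense]) (use adj_A[OF g] assms in auto)
qed

lemma A_subset_adj:
  assumes g: "g \<in> DA"
  shows "g \<in> AD" and "Ad g = A g"
proof -
  have "\<forall>f\<in>DA. \<forall>g\<in>DA. ipX (A f) g = ipX f (A g)"
    using A_symmetric unfolding symmetric_op_def by (elim conjE)
  then have "\<And>f. f \<in> DA \<Longrightarrow> ipX (A f) g = ipX f (A g)" using g by blast
  note adj = this
  show "g \<in> AD" by (rule adj_AI(1)[OF adj])
  show "Ad g = A g" by (rule adj_AI(2)[OF adj])
qed

lemma adj_A_linear: "linear_on AD Ad"
proof (rule linear_onI)
  show "subspaceC AD" unfolding subspaceC_def
  proof (intro conjI ballI allI)
    show "0 \<in> AD" by (rule A_subset_adj(1)[OF subspaceC_zero[OF linear_on_subspaceC[OF A_linear]]])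
    show "x + y \<in> AD" if "x \<in> AD" "y \<in> AD" for x y
      by (rule adj_AI(1)[of _ "Ad x + Ad y"]) (simp add: adj_A[OF that(1)] adj_A[OF that(2)] X1.ip_addR)
    show "c *\<^sub>C x \<in> AD" if "x \<in> AD" for c x
      by (rule adj_AI(1)[of _ "c *\<^sub>C Ad x"]) (simp add: adj_A[OF that] X1.ip_scaleR)
  qed
  show "Ad (x + y) = Ad x + Ad y" if "x \<in> AD" "y \<in> AD" for x y
    by (rule adj_AI(2)) (simp add: adj_A[OF that(1)] adj_A[OF that(2)] X1.ip_addR)
  show "Ad (c *\<^sub>C x) = c *\<^sub>C Ad x" if "x \<in> AD" for c x
    by (rule adj_AI(2)) (simp add: adj_A[OF that] X1.ip_scaleR)
qed

lemma Mstar_linear: "linear_on (Mstar_dom ipX DA A) (Mstar_op ipX S DA A)"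
  unfolding Mstar_dom_def Mstar_op_def by (rule M_op_linear[OF adj_A_linear])

lemma M_subset_Mstar: "M_dom DA \<subseteq> Mstar_dom ipX DA A"
  unfolding M_dom_def Mstar_dom_def using A_subset_adj(1) by auto

lemma Mstar_extends_M: "f \<in> M_dom DA \<Longrightarrow> Mstar_op ipX S DA A f = M_op S A f"
  unfolding M_dom_def Mstar_op_def M_op_def using A_subset_adj(2) by (auto simp: mem_Times_iff)

lemma Mstar_adjoint:
  "g \<in> Mstar_dom ipX DA A \<Longrightarrow> f \<in> M_dom DA \<Longrightarrow>
    ipS ipX S (M_op S A f) g = ipS ipX S f (Mstar_op ipX S DA A g)"
  unfolding Mstar_op_def ipS_M_op_left ipS_M_op_right Mstar_dom_def M_dom_def
  using adj_A by (auto simp: mem_Times_iff)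

text \<open>Testing with \<open>(f, 0)\<close> and \<open>(0, f)\<close>, \<open>f \<in> dom A\<close>, separates the two components.\<close>
lemma Mstar_dom_adjoint:
  "g \<in> Mstar_dom ipX DA A \<longleftrightarrow> (\<exists>h. \<forall>f\<in>M_dom DA. ipS ipX S (M_op S A f) g = ipS ipX S f h)"
proof
  assume "g \<in> Mstar_dom ipX DA A"
  then show "\<exists>h. \<forall>f\<in>M_dom DA. ipS ipX S (M_op S A f) g = ipS ipX S f h" using Mstar_adjoint by blast
next
  assume "\<exists>h. \<forall>f\<in>M_dom DA. ipS ipX S (M_op S A f) g = ipS ipX S f h"
  then obtain h where h: "\<And>f. f \<in> M_dom DA \<Longrightarrow> ipS ipX S (M_op S A f) g = ipS ipX S f h" by blast
  have h_eq: "ipS ipX S f h = ipX (fst f) (fst (S h)) + ipX (snd f) (snd (S h))" for f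
    unfolding ipS_def S_sym[of f] by (simp add: ip2_def)
  have A0: "A 0 = 0" using linear_on_zero[OF A_linear] .
  have 0: "0 \<in> DA" using subspaceC_zero[OF linear_on_subspaceC[OF A_linear]] .
  have "ipX (A f) (snd g) = ipX f ((- \<i>) *\<^sub>C fst (S h))" if f: "f \<in> DA" for f
  proof -
    have "(f, 0) \<in> M_dom DA" unfolding M_dom_def using f 0 by simp
    from h[OF this] have "- (\<i> * ipX (A f) (snd g)) = ipX f (fst (S h))"
      unfolding ipS_M_op_left h_eq using A0 by simp
    then have "ipX (A f) (snd g) = \<i> * ipX f (fst (S h))" by (rule i_mult_solve(1))
    then show ?thesis by (simp add: X1.ip_scaleR)
  qed
  moreover have "ipX (A f) (fst g) = ipX f (\<i> *\<^sub>C snd (S h))" if f: "f \<in> DA" for f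
  proof -
    have "(0, f) \<in> M_dom DA" unfolding M_dom_def using f 0 by simp
    from h[OF this] have "\<i> * ipX (A f) (fst g) = ipX f (snd (S h))"
      unfolding ipS_M_op_left h_eq using A0 by simp
    then have "ipX (A f) (fst g) = - \<i> * ipX f (snd (S h))" by (rule i_mult_solve(2))
    then show ?thesis by (simp add: X1.ip_scaleR)
  qed
  ultimately have "snd g \<in> AD" "fst g \<in> AD" by (blast intro: adj_AI(1))+
  then show "g \<in> Mstar_dom ipX DA A" unfolding Mstar_dom_def by (simp add: mem_Times_iff)
qed

lemma M_dom_dense: "dense_in (ipS ipX S) (M_dom DA) UNIV"
  unfolding dense_in_def
proof (intro conjI ballI allI impI)
  show "M_dom DA \<subseteq> UNIV" by simp
  fix x :: "'x \<times> 'x" and e :: real assume e: "e > 0"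
  define L where "L = sqrt CS"
  have L0: "L \<ge> 0" unfolding L_def using CS(1) by simp
  define d where "d = e / (2 * (L + 1))"
  have d0: "d > 0" unfolding d_def using e L0 by simp
  obtain a where a: "a \<in> DA" "nrm ipX (fst x - a) < d" using DA_dense d0 unfolding dense_in_def by blast
  obtain b where b: "b \<in> DA" "nrm ipX (snd x - b) < d" using DA_dense d0 unfolding dense_in_def by blast
  have "nS (x - (a, b)) \<le> L * n2 (x - (a, b))" unfolding L_def by (rule nS_upper)
  also have "\<dots> \<le> L * (nrm ipX (fst x - a) + nrm ipX (snd x - b))"
    using nrm_ip2_bounds(3)[OF X1.inner_product, of "x - (a, b)"] L0
    by (intro mult_left_mono) simp_all
  also have "\<dots> \<le> L * (2 * d)" using a b L0 by (intro mult_left_mono) auto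
  also have "\<dots> < e" unfolding d_def using e L0 by (simp add: field_simps)
  finally show "\<exists>d\<in>M_dom DA. nS (x - d) < e" unfolding M_dom_def using a b by blast
qed

end

lemma le_by_eps:
  fixes a b K :: real
  assumes "K \<ge> 0" and "\<And>e. e > 0 \<Longrightarrow> a \<le> b + K * e"
  shows "a \<le> b"
proof (rule field_le_epsilon)
  fix e :: real assume e: "e > 0"
  have "a \<le> b + K * (e / (K + 1))" using assms(2)[of "e / (K + 1)"] e assms(1) by simp
  also have "K * (e / (K + 1)) \<le> e" using assms(1) e by (simp add: field_simps)
  finally show "a \<le> b + e" by simp
qed

locale mixed_order_pairing =
  fixes H Hm Hp :: "'h::cvec set" and ipH ipm ipp pair :: "'h \<Rightarrow> 'h \<Rightarrow> complex" and V Vs :: "'h \<Rightarrow> 'h"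
  assumes dual: "dual_m_order H ipH Hm ipm Hp ipp"
    and pairing: "is_pairing H ipH Hm ipm Hp ipp pair"
    and V: "lin_homeo H ipH Hm ipm V"
    and Vs: "pairing_adjoint H ipH Hp pair V Vs"
begin

lemma m_order_m: "m_order_space H ipH Hm ipm" and m_order_p: "m_order_space H ipH Hp ipp"
  using dual unfolding dual_m_order_def by auto

sublocale B: hilbert_space H ipH
  using m_order_m hilbert_on_imp_hilbert_space unfolding m_order_space_def by blast
sublocale M: hilbert_space Hm ipm
  using m_order_m hilbert_on_imp_hilbert_space unfolding m_order_space_def by blast
sublocale P: hilbert_space Hp ipp
  using m_order_p hilbert_on_imp_hilbert_space unfolding m_order_space_def by blast

abbreviation "hn \<equiv> nrm ipH"
abbreviation "mn \<equiv> nrm ipm"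
abbreviation "pn \<equiv> nrm ipp"

lemma dense_m: "dense_in ipm (H \<inter> Hm) Hm" using m_order_m unfolding m_order_space_def by blast
lemma dense_p: "dense_in ipp (H \<inter> Hp) Hp" using m_order_p unfolding m_order_space_def by blast

lemma dual_norm_p:
  "h \<in> H \<inter> Hp \<Longrightarrow> c \<ge> 0 \<Longrightarrow> (\<And>g. g \<in> H \<inter> Hm \<Longrightarrow> cmod (ipH g h) \<le> c * mn g) \<Longrightarrow> pn h \<le> c"
  using dual unfolding dual_m_order_def dual_norm_formula_def by blast
lemma dual_norm_m:
  "h \<in> H \<inter> Hm \<Longrightarrow> c \<ge> 0 \<Longrightarrow> (\<And>g. g \<in> H \<inter> Hp \<Longrightarrow> cmod (ipH g h) \<le> c * pn g) \<Longrightarrow> mn h \<le> c"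
  using dual unfolding dual_m_order_def dual_norm_formula_def by blast

lemma pair_addR: "a \<in> Hm \<Longrightarrow> b \<in> Hp \<Longrightarrow> b' \<in> Hp \<Longrightarrow> pair a (b + b') = pair a b + pair a b'"
  using pairing unfolding is_pairing_def by blast
lemma pair_scaleR: "a \<in> Hm \<Longrightarrow> b \<in> Hp \<Longrightarrow> pair a (c *\<^sub>C b) = cnj c * pair a b"
  using pairing unfolding is_pairing_def by blast
lemma pair_H: "a \<in> H \<inter> Hm \<Longrightarrow> b \<in> H \<inter> Hp \<Longrightarrow> pair a b = ipH a b"
  using pairing unfolding is_pairing_def by blast
lemma pair_addL: "a \<in> Hm \<Longrightarrow> a' \<in> Hm \<Longrightarrow> b \<in> Hp \<Longrightarrow> pair (a + a') b = pair a b + pair a' b"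
  using pairing unfolding is_pairing_def by blast
lemma pair_scaleL: "a \<in> Hm \<Longrightarrow> b \<in> Hp \<Longrightarrow> pair (c *\<^sub>C a) b = c * pair a b"
  using pairing unfolding is_pairing_def by blast
lemma pair_diffL: "a \<in> Hm \<Longrightarrow> a' \<in> Hm \<Longrightarrow> b \<in> Hp \<Longrightarrow> pair (a - a') b = pair a b - pair a' b"
  using pair_addL[of a "- a'" b] pair_scaleL[of a' b "-1"] by (simp add: scaleC_minus1)
lemma pair_diffR: "a \<in> Hm \<Longrightarrow> b \<in> Hp \<Longrightarrow> b' \<in> Hp \<Longrightarrow> pair a (b - b') = pair a b - pair a b'"
  using pair_addR[of a b "- b'"] pair_scaleR[of a b' "-1"] by (simp add: scaleC_minus1)

definition Cp where "Cp = max 0 (SOME C. \<forall>a\<in>Hm. \<forall>b\<in>Hp. cmod (pair a b) \<le> C * mn a * pn b)"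

lemma Cp: "Cp \<ge> 0" "a \<in> Hm \<Longrightarrow> b \<in> Hp \<Longrightarrow> cmod (pair a b) \<le> Cp * mn a * pn b"
proof -
  show "Cp \<ge> 0" unfolding Cp_def by simp
  assume a: "a \<in> Hm" and b: "b \<in> Hp"
  let ?C = "SOME C. \<forall>a\<in>Hm. \<forall>b\<in>Hp. cmod (pair a b) \<le> C * mn a * pn b"
  have "\<exists>C. \<forall>a\<in>Hm. \<forall>b\<in>Hp. cmod (pair a b) \<le> C * mn a * pn b"
    using pairing unfolding is_pairing_def by blast
  then have "\<forall>a\<in>Hm. \<forall>b\<in>Hp. cmod (pair a b) \<le> ?C * mn a * pn b" by (rule someI_ex)
  then have "cmod (pair a b) \<le> ?C * (mn a * pn b)" using a b by (simp add: mult.assoc)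
  also have "\<dots> \<le> Cp * (mn a * pn b)" unfolding Cp_def
    by (rule mult_right_mono) (use a b M.nrm_ge0 P.nrm_ge0 in auto)
  finally show "cmod (pair a b) \<le> Cp * mn a * pn b" by (simp add: mult.assoc)
qed

lemma V_linear: "linear_on H V" using V unfolding lin_homeo_def by blast
lemma V_bij: "bij_betw V H Hm" using V unfolding lin_homeo_def by blast
lemma V_in: "h \<in> H \<Longrightarrow> V h \<in> Hm" using V_bij bij_betwE by blast
lemma Vinv_in: "x \<in> Hm \<Longrightarrow> inv_into H V x \<in> H" using V_bij by (metis bij_betw_def inv_into_into)
lemma V_Vinv: "x \<in> Hm \<Longrightarrow> V (inv_into H V x) = x" using V_bij by (metis bij_betw_def f_inv_into_f)
lemma Vinv_V: "h \<in> H \<Longrightarrow> inv_into H V (V h) = h" using V_bij by (metis bij_betw_def inv_into_f_f)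

definition CV where "CV = (SOME C. C \<ge> 0 \<and> (\<forall>x\<in>Hm. hn (inv_into H V x) \<le> C * mn x))"

lemma CV: "CV \<ge> 0" "x \<in> Hm \<Longrightarrow> hn (inv_into H V x) \<le> CV * mn x"
proof -
  have "\<exists>C. \<forall>x\<in>Hm. hn (inv_into H V x) \<le> C * mn x"
    using V unfolding lin_homeo_def bounded_on_def by blast
  then have "\<exists>C\<ge>0. \<forall>x\<in>Hm. hn (inv_into H V x) \<le> C * mn x"
    by (rule nonneg_bound_exists) simp
  from someI_ex[OF this] show "CV \<ge> 0" "x \<in> Hm \<Longrightarrow> hn (inv_into H V x) \<le> CV * mn x"
    unfolding CV_def by auto
qed

lemma Vinv_linear: "linear_on Hm (inv_into H V)"
proof (rule linear_onI[OF M.subspace])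
  show "inv_into H V (x + y) = inv_into H V x + inv_into H V y" if "x \<in> Hm" "y \<in> Hm" for x y
    using linear_on_add[OF V_linear Vinv_in Vinv_in] V_Vinv Vinv_V[of "inv_into H V x + inv_into H V y"]
      Vinv_in that by simp
  show "inv_into H V (c *\<^sub>C x) = c *\<^sub>C inv_into H V x" if "x \<in> Hm" for c x
    using linear_on_scale[OF V_linear Vinv_in] V_Vinv Vinv_V[of "c *\<^sub>C inv_into H V x"] Vinv_in that
    by simp
qed

lemma Vs_in: "g \<in> Hp \<Longrightarrow> Vs g \<in> H" using Vs unfolding pairing_adjoint_def by blast
lemma Vs_eq: "f \<in> H \<Longrightarrow> g \<in> Hp \<Longrightarrow> pair (V f) g = ipH f (Vs g)" using Vs unfolding pairing_adjoint_def by blast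

lemma Vs_linear: "linear_on Hp Vs"
proof (rule linear_onI[OF P.subspace])
  show "Vs (x + y) = Vs x + Vs y" if x: "x \<in> Hp" and y: "y \<in> Hp" for x y
  proof (rule B.ip_ext)
    fix f assume f: "f \<in> H"
    show "ipH f (Vs (x + y)) = ipH f (Vs x + Vs y)"
      using Vs_eq[OF f] pair_addR[OF V_in[OF f] x y] B.ip_addR[OF Vs_in[OF x] Vs_in[OF y] f] x y by simp
  qed (use Vs_in x y in auto)
  show "Vs (c *\<^sub>C x) = c *\<^sub>C Vs x" if x: "x \<in> Hp" for c x
  proof (rule B.ip_ext)
    fix f assume f: "f \<in> H"
    show "ipH f (Vs (c *\<^sub>C x)) = ipH f (c *\<^sub>C Vs x)"
      using Vs_eq[OF f] pair_scaleR[OF V_in[OF f] x] B.ip_scaleR[OF f Vs_in[OF x]] x by simp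
  qed (use Vs_in x in auto)
qed

text \<open>The dual norm formula, applied to approximations \<open>g' \<in> H \<inter> Hp\<close> of \<open>g\<close>, with
  \<open>(a|g') = \<langle>a, g\<rangle> + \<langle>a, g' - g\<rangle>\<close> and \<open>\<langle>a, g\<rangle> = (V\<inverse> a|V\<^sup># g)\<close>.\<close>
lemma Vs_lower: assumes g: "g \<in> Hp" shows "pn g \<le> CV * hn (Vs g)"
proof (rule le_by_eps[of "Cp + 1"])
  show "Cp + 1 \<ge> 0" using Cp(1) by simp
  fix e :: real assume e: "e > 0"
  obtain g' where g': "g' \<in> H \<inter> Hp" "pn (g - g') < e" using dense_p g e unfolding dense_in_def by blast
  have c0: "CV * hn (Vs g) + Cp * e \<ge> 0" using CV(1) Cp(1) e B.nrm_ge0[OF Vs_in[OF g]] by simp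
  have "pn g' \<le> CV * hn (Vs g) + Cp * e"
  proof (rule dual_norm_p[OF g'(1) c0])
    fix a assume a: "a \<in> H \<inter> Hm"
    have aM: "a \<in> Hm" and gp: "g' \<in> Hp" using a g' by auto
    have "ipH a g' = pair a g + pair a (g' - g)" using pair_H[OF a g'(1)] pair_diffR[OF aM gp g] by simp
    then have "cmod (ipH a g') \<le> cmod (pair a g) + cmod (pair a (g' - g))" by (simp add: norm_triangle_ineq)
    also have "cmod (pair a g) \<le> CV * hn (Vs g) * mn a"
    proof -
      have "cmod (pair a g) \<le> hn (inv_into H V a) * hn (Vs g)"
        using Vs_eq[OF Vinv_in[OF aM] g] V_Vinv[OF aM] B.cauchy_schwarz[OF Vinv_in[OF aM] Vs_in[OF g]] by simp
      also have "\<dots> \<le> CV * mn a * hn (Vs g)"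
        by (rule mult_right_mono[OF CV(2)[OF aM]]) (use B.nrm_ge0[OF Vs_in[OF g]] in simp)
      finally show ?thesis by (simp add: mult_ac)
    qed
    also have "cmod (pair a (g' - g)) \<le> Cp * mn a * pn (g' - g)" using Cp(2)[OF aM] gp g by simp
    also have "Cp * mn a * pn (g' - g) \<le> Cp * mn a * e"
      using g'(2) P.nrm_commute[OF gp g] Cp(1) M.nrm_ge0[OF aM] by (intro mult_left_mono) auto
    finally show "cmod (ipH a g') \<le> (CV * hn (Vs g) + Cp * e) * mn a" by (simp add: algebra_simps)
  qed
  moreover have "pn g \<le> pn g' + pn (g - g')" using P.nrm_triangle[of g' "g - g'"] g g' by simp
  ultimately show "pn g \<le> CV * hn (Vs g) + (Cp + 1) * e" using g'(2) by (simp add: algebra_simps)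
qed

lemma pairing_nondegenerate:
  assumes a: "a \<in> Hm" and orth: "\<And>g. g \<in> Hp \<Longrightarrow> pair a g = 0"
  shows "a = 0"
proof -
  have "mn a \<le> 0"
  proof (rule le_by_eps[of "Cp + 1"])
    show "Cp + 1 \<ge> 0" using Cp(1) by simp
    fix e :: real assume e: "e > 0"
    obtain a' where a': "a' \<in> H \<inter> Hm" "mn (a - a') < e" using dense_m a e unfolding dense_in_def by blast
    have "mn a' \<le> Cp * e"
    proof (rule dual_norm_m[OF a'(1)])
      fix g assume g: "g \<in> H \<inter> Hp"
      have gp: "g \<in> Hp" and aM: "a' \<in> Hm" using g a' by auto
      have "cmod (ipH g a') = cmod (pair (a' - a) g)"
        using B.ip_sym[of a' g] g a' pair_H[OF a'(1) g] pair_diffL[OF aM a gp] orth[OF gp] by simp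
      also have "\<dots> \<le> Cp * mn (a' - a) * pn g" using Cp(2) aM a gp by simp
      also have "\<dots> \<le> Cp * e * pn g"
        using a'(2) M.nrm_commute[OF aM a] Cp(1) P.nrm_ge0[OF gp]
        by (intro mult_right_mono mult_left_mono) auto
      finally show "cmod (ipH g a') \<le> Cp * e * pn g" .
    qed (use Cp(1) e in simp)
    moreover have "mn a \<le> mn a' + mn (a - a')" using M.nrm_triangle[of a' "a - a'"] a a' by simp
    ultimately show "mn a \<le> 0 + (Cp + 1) * e" using a'(2) by (simp add: algebra_simps)
  qed
  then show ?thesis using M.nrm_le0_imp_zero[OF a] by simp
qed

lemma Vs_range_closed: "B.closed_subspace (Vs ` Hp)"
proof (rule B.closed_subspaceI)
  show "Vs ` Hp \<subseteq> H" using Vs_in by blast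
  show "subspaceC (Vs ` Hp)" by (rule subspaceC_image[OF Vs_linear])
  fix ys h assume ys: "\<And>n. ys n \<in> Vs ` Hp" and h: "h \<in> H" and ch: "conv ipH ys h"
  obtain gs where gs: "\<And>n. gs n \<in> Hp" "\<And>n. Vs (gs n) = ys n" by (rule obtain_preimage_seq[where ys = ys, OF ys]) blast
  have ysH: "ys n \<in> H" for n using Vs_in[OF gs(1)[of n]] unfolding gs(2) .
  have "cauchy ipp gs"
  proof (rule cauchy_by_bound[OF B.conv_cauchy[OF ysH h ch] CV(1)])
    show "pn (gs m - gs n) \<le> CV * hn (ys m - ys n)" for m n
      using Vs_lower[of "gs m - gs n"] linear_on_diff[OF Vs_linear gs(1) gs(1)] gs by simp
  qed
  then obtain g where g: "g \<in> Hp" "conv ipp gs g" using P.complete[of gs] gs(1) by blast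
  have "h = Vs g"
  proof (rule B.ip_ext)
    fix f assume f: "f \<in> H"
    have "(\<lambda>n. pair (V f) (gs n) - pair (V f) g) \<longlonglongrightarrow> 0"
    proof (rule Lim_null_comparison[OF always_eventually])
      show "\<forall>n. norm (pair (V f) (gs n) - pair (V f) g) \<le> Cp * mn (V f) * pn (gs n - g)"
      proof
        fix n
        show "norm (pair (V f) (gs n) - pair (V f) g) \<le> Cp * mn (V f) * pn (gs n - g)"
          using Cp(2)[OF V_in[OF f] P.diff_in[OF gs(1)[of n] g(1)]]
            pair_diffR[OF V_in[OF f] gs(1)[of n] g(1)] by simp
      qed
      show "(\<lambda>n. Cp * mn (V f) * pn (gs n - g)) \<longlonglongrightarrow> 0"
        using tendsto_mult_right_zero[OF g(2)[unfolded conv_def]] .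
    qed
    then have "(\<lambda>n. ipH f (ys n)) \<longlonglongrightarrow> ipH f (Vs g)"
      using Vs_eq[OF f gs(1)] Vs_eq[OF f g(1)] gs(2) by (simp add: LIM_zero_iff)
    then show "ipH f h = ipH f (Vs g)" using B.conv_ipR[OF ysH h f ch] LIMSEQ_unique by blast
  qed (use h Vs_in[OF g(1)] in auto)
  then show "h \<in> Vs ` Hp" using g(1) by blast
qed

lemma Vs_onto: "Vs ` Hp = H"
proof (rule B.closed_subspace_eq_if_orth_zero[OF Vs_range_closed])
  fix v assume v: "v \<in> H" and orth: "\<forall>w\<in>Vs ` Hp. ipH w v = 0"
  have "pair (V v) g = 0" if g: "g \<in> Hp" for g
    using orth g Vs_eq[OF v g] B.ip_sym[OF Vs_in[OF g] v] by simp
  then have "V v = 0" by (rule pairing_nondegenerate[OF V_in[OF v]])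
  then show "v = 0" using Vinv_V[OF v] Vinv_V[OF B.zero_in] linear_on_zero[OF V_linear] by simp
qed

end

section \<open>The m-boundary tuple in Cayley form\<close>

locale m_boundary_setting =
  block_operator ipX S DA A + mixed_order_pairing H Hm Hp ipH ipm ipp pair V Vs
  for ipX :: "'x::cvec \<Rightarrow> 'x \<Rightarrow> complex" and S DA A
    and H :: "'h::cvec set" and Hm Hp ipH ipm ipp pair V Vs +
  fixes G0 G1 :: "'x \<times> 'x \<Rightarrow> 'h"
  assumes boundary_tuple: "m_boundary_tuple (ipS ipX S) (Mstar_dom ipX DA A) (Mstar_op ipX S DA A)
      H ipH Hm ipm Hp ipp pair G0 G1"
begin

abbreviation "DS \<equiv> Mstar_dom ipX DA A"
abbreviation "TS \<equiv> Mstar_op ipX S DA A"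

lemma G0_linear: "linear_on DS G0" and G1_linear: "linear_on DS G1"
  using boundary_tuple unfolding m_boundary_tuple_def by auto

lemma G_onto: "(\<lambda>f. (G0 f, G1 f)) ` DS = Hm \<times> Hp"
  using boundary_tuple unfolding m_boundary_tuple_def by blast

lemma G0_in: "f \<in> DS \<Longrightarrow> G0 f \<in> Hm" and G1_in: "f \<in> DS \<Longrightarrow> G1 f \<in> Hp"
  using G_onto by blast+

lemma green_G:
  "f \<in> DS \<Longrightarrow> g \<in> DS \<Longrightarrow>
    ipS ipX S (TS f) g - ipS ipX S f (TS g) = cnj (pair (G0 g) (G1 f)) - pair (G0 f) (G1 g)"
  using boundary_tuple unfolding m_boundary_tuple_def by blast

definition "bnd_a f = inv_into H V (G0 f)"
definition "bnd_b f = Vs (G1 f)"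
definition "bnd_u f = bnd_a f + \<i> *\<^sub>C bnd_b f"
definition "bnd_w f = bnd_a f + (- \<i>) *\<^sub>C bnd_b f"

lemma bnd_a_in: "f \<in> DS \<Longrightarrow> bnd_a f \<in> H" unfolding bnd_a_def using Vinv_in G0_in by blast
lemma bnd_b_in: "f \<in> DS \<Longrightarrow> bnd_b f \<in> H" unfolding bnd_b_def using Vs_in G1_in by blast

lemma bnd_a_linear: "linear_on DS bnd_a"
  unfolding bnd_a_def by (rule linear_on_comp[OF G0_linear Vinv_linear]) (use G0_in in blast)
lemma bnd_b_linear: "linear_on DS bnd_b"
  unfolding bnd_b_def by (rule linear_on_comp[OF G1_linear Vs_linear]) (use G1_in in blast)

lemma green_ab:
  assumes f: "f \<in> DS" and g: "g \<in> DS"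
  shows "ipS ipX S (TS f) g - ipS ipX S f (TS g) = ipH (bnd_b f) (bnd_a g) - ipH (bnd_a f) (bnd_b g)"
proof -
  have "pair (G0 h) (G1 k) = ipH (bnd_a h) (bnd_b k)" if "h \<in> DS" "k \<in> DS" for h k
    unfolding bnd_a_def bnd_b_def
    using Vs_eq[OF Vinv_in[OF G0_in[OF that(1)]] G1_in[OF that(2)]] V_Vinv[OF G0_in[OF that(1)]] by simp
  then show ?thesis
    using green_G[OF f g] B.ip_sym[OF bnd_a_in[OF g] bnd_b_in[OF f]] f g by simp
qed

lemma green_uw:
  assumes f: "f \<in> DS" and g: "g \<in> DS"
  shows "ipS ipX S (TS f) g - ipS ipX S f (TS g) =
    (- \<i> / 2) * (ipH (bnd_u f) (bnd_u g) - ipH (bnd_w f) (bnd_w g))"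
proof -
  have a: "bnd_a f \<in> H" "bnd_a g \<in> H" and b: "bnd_b f \<in> H" "bnd_b g \<in> H"
    using bnd_a_in bnd_b_in f g by auto
  have "ipH (bnd_u f) (bnd_u g) - ipH (bnd_w f) (bnd_w g)
      = 2 * \<i> * (ipH (bnd_b f) (bnd_a g) - ipH (bnd_a f) (bnd_b g))"
    unfolding bnd_u_def bnd_w_def using a b
    by (simp add: B.ip_addL B.ip_addR B.ip_scaleL B.ip_scaleR algebra_simps)
  moreover have "(- \<i> / 2) * (2 * \<i> * z) = z" for z :: complex by (simp add: field_simps)
  ultimately show ?thesis using green_ab[OF f g] by simp
qed

lemma uw_onto:
  assumes p: "p \<in> H" and q: "q \<in> H"
  shows "\<exists>f\<in>DS. bnd_u f = p \<and> bnd_w f = q"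
proof -
  define x where "x = (1/2::complex) *\<^sub>C (p + q)"
  define y where "y = (- \<i> / 2) *\<^sub>C (p - q)"
  have xH: "x \<in> H" and yH: "y \<in> H" unfolding x_def y_def using p q by auto
  obtain y' where y': "y' \<in> Hp" "Vs y' = y" using yH Vs_onto by blast
  have "(V x, y') \<in> (\<lambda>f. (G0 f, G1 f)) ` DS" using G_onto V_in[OF xH] y'(1) by simp
  then obtain f where "f \<in> DS" "(V x, y') = (G0 f, G1 f)" by (rule imageE)
  then have f: "f \<in> DS" "G0 f = V x" "G1 f = y'" by simp_all
  have "bnd_a f = x" "bnd_b f = y" unfolding bnd_a_def bnd_b_def using f y' Vinv_V[OF xH] by simp_all
  moreover have "\<i> *\<^sub>C y = (1/2::complex) *\<^sub>C (p - q)" "(- \<i>) *\<^sub>C y = (- 1/2::complex) *\<^sub>C (p - q)"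
    unfolding y_def by (simp_all add: scaleC_scaleC)
  moreover have "x + c *\<^sub>C (p - q) = (1/2 + c) *\<^sub>C p + (1/2 - c) *\<^sub>C q" for c
    unfolding x_def by (simp add: scaleC_add_right scaleC_diff_right scaleC_add_left scaleC_diff_left)
  ultimately have "bnd_u f = p" "bnd_w f = q" unfolding bnd_u_def bnd_w_def by (simp_all add: scaleC_one)
  then show ?thesis using f(1) by blast
qed

sublocale cayley_boundary_pair "ipS ipX S" H ipH "M_dom DA" "M_op S A" DS TS bnd_u bnd_w
proof (unfold_locales)
  show "dense_in (ipS ipX S) (M_dom DA) UNIV" by (rule M_dom_dense)
  show "M_dom DA \<subseteq> DS" by (rule M_subset_Mstar)
  show "\<And>f. f \<in> M_dom DA \<Longrightarrow> TS f = M_op S A f" by (rule Mstar_extends_M)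
  show "\<And>g. g \<in> DS \<longleftrightarrow> (\<exists>h. \<forall>f\<in>M_dom DA. ipS ipX S (M_op S A f) g = ipS ipX S f h)"
    by (rule Mstar_dom_adjoint)
  show "\<And>f g. g \<in> DS \<Longrightarrow> f \<in> M_dom DA \<Longrightarrow> ipS ipX S (M_op S A f) g = ipS ipX S f (TS g)"
    by (rule Mstar_adjoint)
  show "linear_on DS TS" by (rule Mstar_linear)
  show "linear_on DS bnd_u" unfolding bnd_u_def by (rule linear_on_add_scale[OF bnd_a_linear bnd_b_linear])
  show "linear_on DS bnd_w" unfolding bnd_w_def by (rule linear_on_add_scale[OF bnd_a_linear bnd_b_linear])
  show "\<And>f. f \<in> DS \<Longrightarrow> bnd_u f \<in> H" "\<And>f. f \<in> DS \<Longrightarrow> bnd_w f \<in> H"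
    unfolding bnd_u_def bnd_w_def using bnd_a_in bnd_b_in by simp_all
  show "\<And>f g. f \<in> DS \<Longrightarrow> g \<in> DS \<Longrightarrow> ipS ipX S (TS f) g - ipS ipX S f (TS g) =
      (- \<i> / 2) * (ipH (bnd_u f) (bnd_u g) - ipH (bnd_w f) (bnd_w g))" by (rule green_uw)
  show "\<And>x y. x \<in> H \<Longrightarrow> y \<in> H \<Longrightarrow> \<exists>f\<in>DS. bnd_u f = x \<and> bnd_w f = y" by (rule uw_onto)
qed

lemma bc_dom_eq_contraction_dom:
  assumes K: "linear_on H K"
  shows "bc_dom DS H V Vs G0 G1 K = contraction_dom K"
proof -
  have "K (bnd_a f) + bnd_a f + \<i> *\<^sub>C (K (bnd_b f) - bnd_b f) = K (bnd_u f) + bnd_w f" if f: "f \<in> DS" for f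
    unfolding bnd_u_def bnd_w_def
    using linear_on_add[OF K bnd_a_in[OF f] B.scale_in[OF bnd_b_in[OF f]]]
      linear_on_scale[OF K bnd_b_in[OF f]]
    by (simp add: scaleC_diff_right scaleC_minus_left algebra_simps)
  then show ?thesis
    unfolding bc_dom_def contraction_dom_def Let_def bnd_a_def[symmetric] bnd_b_def[symmetric] by auto
qed

end

theorem theorem6p13:
  fixes ipX :: "'x::cvec \<Rightarrow> 'x \<Rightarrow> complex"
    and DA :: "'x set" and A :: "'x \<Rightarrow> 'x"
    and S :: "'x \<times> 'x \<Rightarrow> 'x \<times> 'x"
    and H Hm Hp :: "'h::cvec set"
    and ipH ipm ipp pair :: "'h \<Rightarrow> 'h \<Rightarrow> complex"
    and G0 G1 :: "'x \<times> 'x \<Rightarrow> 'h"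
    and V Vs :: "'h \<Rightarrow> 'h"
  assumes X: "hilbert_on UNIV ipX"
    and A: "operator DA A" "closed_op ipX DA A" "symmetric_op ipX DA A"
    and S: "bounded_unif_pos_sa ipX S"
    and bt: "m_boundary_tuple (ipS ipX S) (Mstar_dom ipX DA A) (Mstar_op ipX S DA A)
               H ipH Hm ipm Hp ipp pair G0 G1"
    and V: "lin_homeo H ipH Hm ipm V"
    and Vs: "pairing_adjoint H ipH Hp pair V Vs"
  shows
    \<comment> \<open>(i)\<close>
    "(\<forall>D T. extends_op (M_dom DA) (M_op S A) D T \<longrightarrow>
        (m_dissipative (ipS ipX S) D T \<longleftrightarrow>
          (\<exists>K. contraction_on H ipH K \<and>
               D = bc_dom (Mstar_dom ipX DA A) H V Vs G0 G1 K \<and>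
               (\<forall>\<psi>\<in>D. T \<psi> = Mstar_op ipX S DA A \<psi>))))
     \<comment> \<open>(ii) one-to-one correspondence\<close>
     \<and> (\<forall>K. contraction_on H ipH K \<longrightarrow>
          extends_op (M_dom DA) (M_op S A) (bc_dom (Mstar_dom ipX DA A) H V Vs G0 G1 K) (Mstar_op ipX S DA A)
          \<and> m_dissipative (ipS ipX S) (bc_dom (Mstar_dom ipX DA A) H V Vs G0 G1 K) (Mstar_op ipX S DA A))
     \<and> (\<forall>K1 K2. contraction_on H ipH K1 \<and> contraction_on H ipH K2 \<and>
          bc_dom (Mstar_dom ipX DA A) H V Vs G0 G1 K1 = bc_dom (Mstar_dom ipX DA A) H V Vs G0 G1 K2
          \<longrightarrow> (\<forall>h\<in>H. K1 h = K2 h))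
     \<and> (\<forall>K. contraction_on H ipH K \<longrightarrow>
          (selfadjoint_op (ipS ipX S) (bc_dom (Mstar_dom ipX DA A) H V Vs G0 G1 K) (Mstar_op ipX S DA A)
           \<longleftrightarrow> unitary_on H ipH K))"
proof -
  interpret m_boundary_setting ipX S DA A H Hm Hp ipH ipm ipp pair V Vs G0 G1
    using bt unfolding m_boundary_tuple_def
    by unfold_locales (use X S A(1,3) bt V Vs in simp_all)
  have dom: "bc_dom (Mstar_dom ipX DA A) H V Vs G0 G1 K = contraction_dom K"
    if "contraction_on H ipH K" for K
    using bc_dom_eq_contraction_dom[OF contraction_on_linear[OF that]] .
  show ?thesis
    using m_dissipative_extension_iff contraction_dom_m_dissipative contraction_dom_inj
      selfadjoint_contraction_dom_iff_unitary
    by (simp add: dom cong: conj_cong)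
qed

end
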